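(* Let $G$ be a finite, simple, connected graph with vertex set $V$, maximum degree $m$, and an involution $\sigma$. Let $v\in V$ with $v':=\sigma(v)\ne v$ and $d=d(v,v')$. Let $H=A_G+D_Q$ with potential $Q$ at $v$ and $v'$ and $0$ elsewhere. For every (small) $\epsilon\in(0,1)$, if $$Q\ge \frac{256\,(m+1)}{\epsilon^2},$$ then there exists a time $t$ with $0<t<\frac{\pi}{2}(Q+m)^{d-1}$ such that $p(t)\ge 1-\epsilon$.
   Context: $A_G$ is the adjacency matrix of $G$ and $D_Q$ is the diagonal matrix of the potential. An involution of $G$ is a bijection $\sigma:V\to V$ with $\sigma\circ\sigma=\mathrm{id}$ such that $x\sim y$ implies $\sigma(x)\sim\sigma(y)$. The transfer probability from $v$ to $v'$ at time $t$ is $p(t)=|\langle e_v, e^{itH} e_{v'}\rangle|^2$, where $e_x$ is the standard basis vector of vertex $x$. *)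

theory Defs
  imports "HOL-Analysis.Analysis"
begin

definition simple_graph :: "('a \<Rightarrow> 'a \<Rightarrow> bool) \<Rightarrow> bool" where
  "simple_graph E \<longleftrightarrow> (\<forall>x y. E x y \<longrightarrow> E y x) \<and> (\<forall>x. \<not> E x x)"

definition connected_graph :: "('a \<Rightarrow> 'a \<Rightarrow> bool) \<Rightarrow> bool" where
  "connected_graph E \<longleftrightarrow> (\<forall>x y. E\<^sup>*\<^sup>* x y)"

definition graph_dist :: "('a \<Rightarrow> 'a \<Rightarrow> bool) \<Rightarrow> 'a \<Rightarrow> 'a \<Rightarrow> nat" where
  "graph_dist E x y = (LEAST n. (E ^^ n) x y)"

definition max_degree :: "('a::finite \<Rightarrow> 'a \<Rightarrow> bool) \<Rightarrow> nat" where
  "max_degree E = Max (range (\<lambda>x. card {y. E x y}))"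

definition graph_involution :: "('a \<Rightarrow> 'a \<Rightarrow> bool) \<Rightarrow> ('a \<Rightarrow> 'a) \<Rightarrow> bool" where
  "graph_involution E \<sigma> \<longleftrightarrow> \<sigma> \<circ> \<sigma> = id \<and> (\<forall>x y. E x y \<longrightarrow> E (\<sigma> x) (\<sigma> y))"

definition adj_matrix :: "('a \<Rightarrow> 'a \<Rightarrow> bool) \<Rightarrow> 'a \<Rightarrow> 'a \<Rightarrow> real" where
  "adj_matrix E x y = (if E x y then 1 else 0)"

definition hamiltonian :: "('a \<Rightarrow> 'a \<Rightarrow> bool) \<Rightarrow> real \<Rightarrow> 'a \<Rightarrow> 'a \<Rightarrow> 'a \<Rightarrow> 'a \<Rightarrow> real" where
  "hamiltonian E Q v v' x y = adj_matrix E x y + (if x = y \<and> (x = v \<or> x = v') then Q else 0)"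

fun mat_pow :: "('a::finite \<Rightarrow> 'a \<Rightarrow> complex) \<Rightarrow> nat \<Rightarrow> 'a \<Rightarrow> 'a \<Rightarrow> complex" where
  "mat_pow M 0 = (\<lambda>x y. if x = y then 1 else 0)"
| "mat_pow M (Suc k) = (\<lambda>x y. \<Sum>z\<in>UNIV. M x z * mat_pow M k z y)"

definition mat_exp :: "('a::finite \<Rightarrow> 'a \<Rightarrow> complex) \<Rightarrow> 'a \<Rightarrow> 'a \<Rightarrow> complex" where
  "mat_exp M x y = (\<Sum>k. mat_pow M k x y / of_nat (fact k))"

definition transfer_prob :: "('a::finite \<Rightarrow> 'a \<Rightarrow> real) \<Rightarrow> 'a \<Rightarrow> 'a \<Rightarrow> real \<Rightarrow> real" where
  "transfer_prob H v v' t = (cmod (mat_exp (\<lambda>x y. \<i> * complex_of_real (t * H x y)) v v'))\<^sup>2"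

end

theory Submission
  imports Defs
begin

text \<open>Let R be the complement of {v, \<sigma> v} and A_R the adjacency matrix restricted to R. For
  s = \<plusminus>1 the vector \<phi> = e_v + s e_\<sigma>v + (l - A_R)^-1 b_s, where b_s is the restriction to R of
  A e_v + s A e_\<sigma>v, is an eigenvector of H with eigenvalue l once l solves the secular equation
  l = Q + s A(v, \<sigma> v) + D(l) + s J(l), with D and J resolvent entries of the couplings of v and
  \<sigma> v to R; the symmetry \<sigma> makes the equations at v and at \<sigma> v coincide. The intermediate value
  theorem gives roots l+ and l- within 2 of Q. Their gap is at least 2 A(v, \<sigma> v) + J(l+) + J(l-)
  up to a factor 1 + O(1/Q), and J(l) \<ge> l^-(d - 1) because a shortest path from v to \<sigma> v runs
  through R. Finally e_\<sigma>v = (\<phi>+ - \<phi>-)/2 - w with |w|^2 = O(m/Q^2), so by unitarity the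
  amplitude is (exp(i t l+) - exp(i t l-))/2 up to \<epsilon>/4, and at a time t slightly below
  \<pi>/(l+ - l-) its modulus is close to 1.\<close>

section \<open>Matrix powers and the matrix exponential\<close>

lemma mat_pow_Suc_apply: "mat_pow M (Suc k) x y = (\<Sum>z\<in>UNIV. M x z * mat_pow M k z y)"
  by simp

lemma mat_pow_0_apply: "mat_pow M 0 x y = (if x = y then 1 else 0)"
  by simp

declare mat_pow.simps[simp del]

lemma sum_indicator_mult: fixes f :: "'c::finite \<Rightarrow> 'b::comm_ring_1"
  shows "(\<Sum>z\<in>UNIV. (if x = z then 1 else 0) * f z) = f x"
  by (simp add: if_distrib[where f="\<lambda>a. a * _"] cong: if_cong)

lemma mat_pow_1: "mat_pow M 1 x y = M x y"
  by (simp add: mat_pow_Suc_apply mat_pow_0_apply if_distrib cong: if_cong)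

lemma mat_pow_scale:
  "mat_pow (\<lambda>x y. c * P x y) k x y = c ^ k * mat_pow P k x y"
proof (induction k arbitrary: x y)
  case 0 then show ?case by (simp add: mat_pow_0_apply)
next
  case (Suc k)
  show ?case by (simp add: mat_pow_Suc_apply Suc sum_distrib_left mult_ac)
qed

lemma mat_pow_add:
  "mat_pow P (j + k) x y = (\<Sum>z\<in>UNIV. mat_pow P j x z * mat_pow P k z y)"
proof (induction j arbitrary: x y)
  case 0 then show ?case by (simp add: mat_pow_0_apply sum_indicator_mult)
next
  case (Suc j)
  have "mat_pow P (Suc j + k) x y = (\<Sum>w\<in>UNIV. P x w * (\<Sum>z\<in>UNIV. mat_pow P j w z * mat_pow P k z y))"
    by (simp add: mat_pow_Suc_apply Suc)
  also have "\<dots> = (\<Sum>w\<in>UNIV. \<Sum>z\<in>UNIV. P x w * mat_pow P j w z * mat_pow P k z y)"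
    by (simp add: sum_distrib_left mult_ac)
  also have "\<dots> = (\<Sum>z\<in>UNIV. \<Sum>w\<in>UNIV. P x w * mat_pow P j w z * mat_pow P k z y)"
    by (rule sum.swap)
  also have "\<dots> = (\<Sum>z\<in>UNIV. (\<Sum>w\<in>UNIV. P x w * mat_pow P j w z) * mat_pow P k z y)"
    by (simp add: sum_distrib_right)
  finally show ?case by (simp add: mat_pow_Suc_apply)
qed

lemma mat_pow_symmetric:
  assumes "\<And>x y. P x y = P y x"
  shows "mat_pow P k x y = mat_pow P k y x"
proof (induction k arbitrary: x y)
  case 0 then show ?case by (simp add: mat_pow_0_apply)
next
  case (Suc k)
  have "mat_pow P (Suc k) x y = mat_pow P (k + 1) x y" by simp
  also have "\<dots> = (\<Sum>z\<in>UNIV. mat_pow P k x z * P z y)"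
    by (simp only: mat_pow_add mat_pow_1)
  also have "\<dots> = (\<Sum>z\<in>UNIV. P y z * mat_pow P k z x)"
    by (simp add: Suc assms mult.commute)
  finally show ?case by (simp add: mat_pow_Suc_apply)
qed

lemma mat_pow_cnj:
  "cnj (mat_pow P k x y) = mat_pow (\<lambda>x y. cnj (P x y)) k x y"
proof (induction k arbitrary: x y)
  case 0 then show ?case by (simp add: mat_pow_0_apply)
next
  case (Suc k) then show ?case by (simp add: mat_pow_Suc_apply)
qed

lemma norm_mat_pow_le:
  fixes P :: "'a::finite \<Rightarrow> 'a \<Rightarrow> complex"
  assumes "\<And>x y. norm (P x y) \<le> c"
  shows "norm (mat_pow P k x y) \<le> (real CARD('a) * c) ^ k"
proof (induction k arbitrary: x y)
  case 0 then show ?case by (simp add: mat_pow_0_apply)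
next
  case (Suc k)
  have c0: "0 \<le> c" using assms[of x y] norm_ge_zero order_trans by blast
  have "norm (mat_pow P (Suc k) x y) \<le> (\<Sum>z\<in>UNIV. norm (P x z * mat_pow P k z y))"
    unfolding mat_pow_Suc_apply by (rule norm_sum)
  also have "\<dots> \<le> (\<Sum>z\<in>(UNIV::'a set). c * (real CARD('a) * c) ^ k)"
    apply (rule sum_mono) unfolding norm_mult
    by (rule mult_mono[OF assms Suc]) (auto simp: c0)
  also have "\<dots> = (real CARD('a) * c) ^ Suc k" by simp
  finally show ?case .
qed

lemma summable_norm_mat_exp_series:
  fixes P :: "'a::finite \<Rightarrow> 'a \<Rightarrow> complex"
  shows "summable (\<lambda>k. norm (mat_pow P k x y / of_nat (fact k)))"
proof -
  obtain c where c: "\<And>x y. norm (P x y) \<le> c"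
  proof
    show "norm (P x y) \<le> (\<Sum>p\<in>UNIV. norm (P (fst p) (snd p)))" for x y
      using member_le_sum[of "(x,y)" UNIV "\<lambda>p. norm (P (fst p) (snd p))"] by auto
  qed
  have "summable (\<lambda>k. inverse (fact k) * (real CARD('a) * c) ^ k)"
    by (rule summable_exp)
  then show ?thesis
  proof (rule summable_comparison_test[rotated], intro exI allI impI)
    fix k :: nat
    have "norm (mat_pow P k x y / of_nat (fact k)) = inverse (fact k) * norm (mat_pow P k x y)"
      by (simp add: norm_divide divide_inverse mult.commute norm_mult norm_inverse)
    also have "\<dots> \<le> inverse (fact k) * (real CARD('a) * c) ^ k"
      by (rule mult_left_mono[OF norm_mat_pow_le[OF c]]) auto
    finally show "norm (norm (mat_pow P k x y / of_nat (fact k))) \<le> inverse (fact k) * (real CARD('a) * c) ^ k"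
      by simp
  qed
qed

lemma mat_exp_sums:
  "(\<lambda>k. mat_pow P k x y / of_nat (fact k)) sums mat_exp P x y"
  unfolding mat_exp_def using summable_norm_cancel[OF summable_norm_mat_exp_series] by (rule summable_sums)

lemma mat_exp_uminus_inverse:
  fixes P :: "'a::finite \<Rightarrow> 'a \<Rightarrow> complex"
  shows "(\<Sum>z\<in>UNIV. mat_exp (\<lambda>x y. - c * P x y) x z * mat_exp (\<lambda>x y. c * P x y) z y)
         = (if x = y then 1 else 0)"
proof -
  define a where "a z k = mat_pow (\<lambda>x y. - c * P x y) k x z / of_nat (fact k)" for z k
  define b where "b z k = mat_pow (\<lambda>x y. c * P x y) k z y / of_nat (fact k)" for z k
  have "(\<lambda>n. \<Sum>i\<le>n. a z i * b z (n - i)) sums ((\<Sum>k. a z k) * (\<Sum>k. b z k))" for z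
    unfolding a_def b_def by (rule Cauchy_product_sums[OF summable_norm_mat_exp_series summable_norm_mat_exp_series])
  hence "(\<lambda>n. \<Sum>i\<le>n. a z i * b z (n - i)) sums (mat_exp (\<lambda>x y. - c * P x y) x z * mat_exp (\<lambda>x y. c * P x y) z y)" for z
    unfolding a_def b_def mat_exp_def by simp
  hence S: "(\<lambda>n. \<Sum>z\<in>UNIV. \<Sum>i\<le>n. a z i * b z (n - i)) sums
       (\<Sum>z\<in>UNIV. mat_exp (\<lambda>x y. - c * P x y) x z * mat_exp (\<lambda>x y. c * P x y) z y)"
    by (rule sums_sum)
  have eq: "(\<Sum>z\<in>UNIV. \<Sum>i\<le>n. a z i * b z (n - i)) = (if n = 0 then (if x = y then 1 else 0) else 0)" for n
  proof -
    have "(\<Sum>z\<in>UNIV. \<Sum>i\<le>n. a z i * b z (n - i))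
        = (\<Sum>i\<le>n. ((-c)^i * c^(n-i) / (of_nat (fact i) * of_nat (fact (n-i)))) *
              (\<Sum>z\<in>UNIV. mat_pow P i x z * mat_pow P (n-i) z y))"
      unfolding a_def b_def mat_pow_scale
      by (subst sum.swap) (simp add: sum_distrib_left sum_divide_distrib algebra_simps)
    also have "\<dots> = (\<Sum>i\<le>n. (of_nat (n choose i) * (-c)^i * c^(n-i)) * (mat_pow P n x y / of_nat (fact n)))"
    proof (rule sum.cong[OF refl])
      fix i assume i: "i \<in> {..n}"
      hence "(\<Sum>z\<in>UNIV. mat_pow P i x z * mat_pow P (n-i) z y) = mat_pow P n x y"
        using mat_pow_add[of P i "n-i" x y, symmetric] by simp
      moreover have "(of_nat (n choose i) :: complex) = fact n / (fact i * fact (n - i))"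
        using i by (simp add: binomial_fact)
      ultimately show "((-c)^i * c^(n-i) / (of_nat (fact i) * of_nat (fact (n-i)))) *
              (\<Sum>z\<in>UNIV. mat_pow P i x z * mat_pow P (n-i) z y)
          = (of_nat (n choose i) * (-c)^i * c^(n-i)) * (mat_pow P n x y / of_nat (fact n))"
        by (simp add: field_simps)
    qed
    also have "\<dots> = (-c + c)^n * (mat_pow P n x y / of_nat (fact n))"
      by (simp only: binomial_ring[of "-c" c n] sum_distrib_right)
    also have "\<dots> = (if n = 0 then (if x = y then 1 else 0) else 0)"
      by (simp add: mat_pow_0_apply)
    finally show ?thesis .
  qed
  have "(\<lambda>n. if n = 0 then (if x = y then 1 else 0) else 0) sums (if x = y then (1::complex) else 0)"
    using sums_single[of 0 "\<lambda>_. if x = y then (1::complex) else 0"] by simp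
  with S show ?thesis unfolding eq using sums_unique2 by blast
qed

lemma mat_exp_cnj:
  "cnj (mat_exp P x y) = mat_exp (\<lambda>x y. cnj (P x y)) x y"
proof -
  have "(\<lambda>k. cnj (mat_pow P k x y / of_nat (fact k))) sums cnj (mat_exp P x y)"
    by (rule sums_cnj[THEN iffD2, OF mat_exp_sums])
  moreover have "cnj (mat_pow P k x y / of_nat (fact k)) = mat_pow (\<lambda>x y. cnj (P x y)) k x y / of_nat (fact k)" for k
    by (simp only: complex_cnj_divide mat_pow_cnj complex_cnj_of_nat)
  ultimately have "(\<lambda>k. mat_pow (\<lambda>x y. cnj (P x y)) k x y / of_nat (fact k)) sums cnj (mat_exp P x y)"
    by simp
  thus ?thesis using mat_exp_sums sums_unique2 by blast
qed

lemma mat_exp_symmetric: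
  assumes "\<And>x y. P x y = P y x"
  shows "mat_exp P x y = mat_exp P y x"
  unfolding mat_exp_def by (simp only: mat_pow_symmetric[of P, OF assms])

lemma mat_pow_eigenvector:
  fixes P :: "'a::finite \<Rightarrow> 'a \<Rightarrow> complex"
  assumes "\<And>x. (\<Sum>z\<in>UNIV. P x z * \<phi> z) = \<mu> * \<phi> x"
  shows "(\<Sum>z\<in>UNIV. mat_pow P k x z * \<phi> z) = \<mu> ^ k * \<phi> x"
proof (induction k arbitrary: x)
  case 0 then show ?case by (simp add: mat_pow_0_apply sum_indicator_mult)
next
  case (Suc k)
  have "(\<Sum>z\<in>UNIV. mat_pow P (Suc k) x z * \<phi> z) = (\<Sum>z\<in>UNIV. \<Sum>w\<in>UNIV. P x w * mat_pow P k w z * \<phi> z)"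
    unfolding mat_pow_Suc_apply by (simp add: sum_distrib_right)
  also have "\<dots> = (\<Sum>w\<in>UNIV. \<Sum>z\<in>UNIV. P x w * mat_pow P k w z * \<phi> z)"
    by (rule sum.swap)
  also have "\<dots> = (\<Sum>w\<in>UNIV. P x w * (\<Sum>z\<in>UNIV. mat_pow P k w z * \<phi> z))"
    by (simp add: sum_distrib_left mult_ac)
  also have "\<dots> = (\<Sum>w\<in>UNIV. P x w * (\<mu> ^ k * \<phi> w))"
    by (simp only: Suc.IH)
  also have "\<dots> = \<mu> ^ k * (\<Sum>w\<in>UNIV. P x w * \<phi> w)"
    by (simp add: sum_distrib_left mult_ac)
  finally show ?case by (simp add: assms)
qed

lemma mat_exp_eigenvector:
  fixes P :: "'a::finite \<Rightarrow> 'a \<Rightarrow> complex"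
  assumes "\<And>x. (\<Sum>z\<in>UNIV. P x z * \<phi> z) = \<mu> * \<phi> x"
  shows "(\<Sum>z\<in>UNIV. mat_exp P x z * \<phi> z) = exp \<mu> * \<phi> x"
proof -
  have "(\<lambda>k. \<Sum>z\<in>UNIV. mat_pow P k x z / of_nat (fact k) * \<phi> z) sums (\<Sum>z\<in>UNIV. mat_exp P x z * \<phi> z)"
    by (rule sums_sum) (rule sums_mult2[OF mat_exp_sums])
  moreover have "(\<Sum>z\<in>UNIV. mat_pow P k x z / of_nat (fact k) * \<phi> z) = \<mu> ^ k / fact k * \<phi> x" for k
    using mat_pow_eigenvector[OF assms, of k x]
    by (simp add: sum_divide_distrib[symmetric] mult_ac)
  moreover have "(\<lambda>k. \<mu> ^ k / fact k * \<phi> x) sums (exp \<mu> * \<phi> x)"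
    using sums_mult2[OF exp_converges[of \<mu>], of "\<phi> x"] by (simp add: scaleR_conv_of_real divide_inverse mult_ac)
  ultimately show ?thesis using sums_unique2 by simp
qed

lemma unitary_sum_norm2_eq:
  fixes U :: "'a::finite \<Rightarrow> 'a \<Rightarrow> complex"
  assumes "\<And>x y. (\<Sum>z\<in>UNIV. cnj (U z x) * U z y) = (if x = y then 1 else 0)"
  shows "(\<Sum>x\<in>UNIV. (cmod (\<Sum>z\<in>UNIV. U x z * w z))\<^sup>2) = (\<Sum>z\<in>UNIV. (cmod (w z))\<^sup>2)"
proof -
  have "complex_of_real (\<Sum>x\<in>UNIV. (cmod (\<Sum>z\<in>UNIV. U x z * w z))\<^sup>2)
      = (\<Sum>x\<in>UNIV. (\<Sum>z\<in>UNIV. U x z * w z) * cnj (\<Sum>z\<in>UNIV. U x z * w z))"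
    by (simp only: of_real_sum complex_norm_square)
  also have "\<dots> = (\<Sum>x\<in>UNIV. \<Sum>z'\<in>UNIV. \<Sum>z\<in>UNIV. w z * cnj (w z') * (cnj (U x z') * U x z))"
    by (simp add: sum_distrib_left sum_distrib_right cnj_sum mult_ac)
  also have "\<dots> = (\<Sum>z'\<in>UNIV. \<Sum>x\<in>UNIV. \<Sum>z\<in>UNIV. w z * cnj (w z') * (cnj (U x z') * U x z))"
    by (rule sum.swap)
  also have "\<dots> = (\<Sum>z'\<in>UNIV. \<Sum>z\<in>UNIV. \<Sum>x\<in>UNIV. w z * cnj (w z') * (cnj (U x z') * U x z))"
    by (rule sum.cong[OF refl], rule sum.swap)
  also have "\<dots> = (\<Sum>z'\<in>UNIV. \<Sum>z\<in>UNIV. w z * cnj (w z') * (\<Sum>x\<in>UNIV. cnj (U x z') * U x z))"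
    by (simp add: sum_distrib_left)
  also have "\<dots> = (\<Sum>z'\<in>UNIV. \<Sum>z\<in>UNIV. w z * cnj (w z') * (if z' = z then 1 else 0))"
    by (simp only: assms)
  also have "\<dots> = (\<Sum>z\<in>UNIV. w z * cnj (w z))"
    by (rule sum.cong[OF refl]) (simp add: if_distrib[where f="\<lambda>a. _ * a"] cong: if_cong)
  also have "\<dots> = complex_of_real (\<Sum>z\<in>UNIV. (cmod (w z))\<^sup>2)"
    by (simp only: of_real_sum complex_norm_square)
  finally show ?thesis using of_real_eq_iff by blast
qed

section \<open>Neumann series\<close>

text \<open>If M has row sums at most m < l, then (l - M)^-1 = \<Sum>k. M^k / l^(k+1); \<open>neumann_sum c l\<close>
  is this series for a scalar sequence c, typically an entry of M^k.\<close>

definition neumann_sum :: "(nat \<Rightarrow> real) \<Rightarrow> real \<Rightarrow> real" where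
  "neumann_sum c l = (1/l) * (\<Sum>k. c k * (1/l)^k)"

lemma neumann_term_abs_le:
  fixes c :: "nat \<Rightarrow> real" and C m l :: real
  assumes "\<bar>c k\<bar> \<le> C * m ^ k" "0 < l"
  shows "\<bar>c k * (1/l)^k\<bar> \<le> C * (m/l)^k"
proof -
  have "\<bar>c k * (1/l)^k\<bar> = \<bar>c k\<bar> * (1/l)^k" using assms(2) by (simp add: abs_mult)
  also have "\<dots> \<le> (C * m ^ k) * (1/l)^k" by (rule mult_right_mono[OF assms(1)]) (use assms(2) in simp)
  also have "\<dots> = C * (m/l)^k" by (simp add: power_divide)
  finally show ?thesis .
qed

lemma summable_neumann_terms:
  fixes c :: "nat \<Rightarrow> real" and C m l :: real
  assumes "\<And>k. \<bar>c k\<bar> \<le> C * m ^ k" "0 \<le> m" "m < l"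
  shows "summable (\<lambda>k. \<bar>c k * (1/l)^k\<bar>)" "summable (\<lambda>k. c k * (1/l)^k)"
proof -
  have "summable (\<lambda>k. C * (m/l)^k)" by (rule summable_mult, rule summable_geometric) (use assms in auto)
  thus "summable (\<lambda>k. \<bar>c k * (1/l)^k\<bar>)"
    by (rule summable_comparison_test'[where N=0]) (use neumann_term_abs_le assms in auto)
  thus "summable (\<lambda>k. c k * (1/l)^k)" by (rule summable_rabs_cancel)
qed

lemma abs_neumann_sum_le:
  fixes c :: "nat \<Rightarrow> real" and C m l :: real
  assumes "\<And>k. \<bar>c k\<bar> \<le> C * m ^ k" "0 \<le> m" "m < l"
  shows "\<bar>neumann_sum c l\<bar> \<le> C / (l - m)"
proof -
  have l0: "0 < l" using assms by linarith
  have geom: "(\<lambda>k. (m/l)^k) sums (l / (l - m))"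
    using geometric_sums[of "m/l"] assms by (simp add: field_simps)
  have "\<bar>\<Sum>k. c k * (1/l)^k\<bar> \<le> (\<Sum>k. \<bar>c k * (1/l)^k\<bar>)"
    by (rule summable_rabs, rule summable_neumann_terms(1)[OF assms])
  also have "\<dots> \<le> (\<Sum>k. C * (m/l)^k)"
    using neumann_term_abs_le[OF assms(1) l0] summable_neumann_terms(1)[OF assms]
      summable_mult[OF sums_summable[OF geom]]
    by (rule suminf_le)
  also have "\<dots> = C * (l / (l - m))"
    using sums_unique[OF sums_mult[OF geom, of C]] by simp
  finally have "(1/l) * \<bar>\<Sum>k. c k * (1/l)^k\<bar> \<le> (1/l) * (C * (l / (l - m)))"
    by (rule mult_left_mono) (use l0 in auto)
  thus ?thesis unfolding neumann_sum_def using l0 by (simp add: abs_mult)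
qed

lemma neumann_sum_nonneg:
  fixes c :: "nat \<Rightarrow> real" and C m l :: real
  assumes "\<And>k. \<bar>c k\<bar> \<le> C * m ^ k" "0 \<le> m" "m < l" "\<And>k. 0 \<le> c k"
  shows "0 \<le> neumann_sum c l"
proof -
  have l0: "0 < l" using assms by linarith
  have "0 \<le> (\<Sum>k. c k * (1/l)^k)"
    by (rule suminf_nonneg[OF summable_neumann_terms(2)[OF assms(1-3)]]) (use assms(4) l0 in auto)
  thus ?thesis unfolding neumann_sum_def using l0 by simp
qed

lemma neumann_sum_sums:
  fixes c :: "nat \<Rightarrow> real" and C m l :: real
  assumes "\<And>k. \<bar>c k\<bar> \<le> C * m ^ k" "0 \<le> m" "m < l"
  shows "(\<lambda>k. c k * (1/l)^(Suc k)) sums neumann_sum c l"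
proof -
  have "(\<lambda>k. (1/l) * (c k * (1/l)^k)) sums ((1/l) * (\<Sum>k. c k * (1/l)^k))"
    by (rule sums_mult, rule summable_sums, rule summable_neumann_terms(2)[OF assms])
  thus ?thesis unfolding neumann_sum_def by (simp add: mult_ac)
qed

lemma neumann_sum_ge_term:
  fixes c :: "nat \<Rightarrow> real" and C m l :: real
  assumes "\<And>k. \<bar>c k\<bar> \<le> C * m ^ k" "0 \<le> m" "m < l" "\<And>k. 0 \<le> c k"
  shows "c j * (1/l)^(Suc j) \<le> neumann_sum c l"
proof -
  have l0: "0 < l" using assms by linarith
  have "sum (\<lambda>k. c k * (1/l)^(Suc k)) {j} \<le> (\<Sum>k. c k * (1/l)^(Suc k))"
    by (rule sum_le_suminf[OF sums_summable[OF neumann_sum_sums[OF assms(1-3)]]]) (use assms(4) l0 in auto)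
  thus ?thesis using sums_unique[OF neumann_sum_sums[OF assms(1-3)]] by simp
qed

lemma isCont_neumann_sum:
  fixes c :: "nat \<Rightarrow> real" and C m l :: real
  assumes "\<And>k. \<bar>c k\<bar> \<le> C * m ^ k" "0 \<le> m" "2 * m + 1 < l"
  shows "isCont (neumann_sum c) l"
proof -
  define K where "K = 1 / (2 * m + 1)"
  have K: "0 < K" "m * K < 1" using assms(2) by (auto simp: K_def field_simps)
  have bound: "\<bar>c k * K^k\<bar> \<le> C * (m * K)^k" for k
  proof -
    have "\<bar>c k * K^k\<bar> = \<bar>c k\<bar> * K^k" using K by (simp add: abs_mult)
    also have "\<dots> \<le> (C * m ^ k) * K^k" by (rule mult_right_mono[OF assms(1)]) (use K in simp)
    also have "\<dots> = C * (m * K)^k" by (simp add: power_mult_distrib)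
    finally show ?thesis .
  qed
  have "summable (\<lambda>k. C * (m * K)^k)" by (rule summable_mult, rule summable_geometric) (use K assms(2) in auto)
  hence sK: "summable (\<lambda>k. c k * K^k)"
    by (rule summable_comparison_test'[where N=0]) (use bound in auto)
  have l0: "0 < l" using assms by linarith
  have "1/l < K" unfolding K_def using assms(2,3) by (simp add: field_simps)
  hence "norm (1/l) < norm K" using l0 K by simp
  hence c1: "isCont (\<lambda>x. \<Sum>n. c n * x^n) (1/l)" by (rule isCont_powser[OF sK])
  have c2: "isCont (\<lambda>x. 1/x) l" using l0 by (intro continuous_intros) (auto simp del: divide_const_simps)
  have "isCont (\<lambda>x. (\<Sum>n. c n * (1/x)^n)) l" by (rule isCont_o2[OF c2 c1])
  hence "isCont (\<lambda>x. (1/x) * (\<Sum>n. c n * (1/x)^n)) l" using c2 by (rule isCont_mult[rotated])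
  thus ?thesis unfolding neumann_sum_def[abs_def] .
qed

lemma abs_power_diff_le:
  fixes a b M :: real
  assumes "0 \<le> a" "a \<le> M" "0 \<le> b" "b \<le> M"
  shows "\<bar>a ^ n - b ^ n\<bar> \<le> real n * M ^ (n - 1) * \<bar>a - b\<bar>"
proof -
  have "\<bar>(\<Sum>i<n. b^(n - Suc i) * a^i)\<bar> \<le> (\<Sum>i<n. M ^ (n - 1))"
  proof (rule order_trans[OF sum_abs], rule sum_mono)
    fix i assume "i \<in> {..<n}"
    hence i: "i < n" by simp
    have "\<bar>b^(n - Suc i) * a^i\<bar> = b^(n - Suc i) * a^i" using assms by simp
    also have "\<dots> \<le> M^(n - Suc i) * M^i"
      using assms by (intro mult_mono power_mono) auto
    also have "\<dots> = M ^ (n - 1)" using i by (simp add: power_add[symmetric])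
    finally show "\<bar>b^(n - Suc i) * a^i\<bar> \<le> M ^ (n - 1)" .
  qed
  hence "\<bar>(\<Sum>i<n. b^(n - Suc i) * a^i)\<bar> \<le> real n * M ^ (n - 1)" by simp
  hence "\<bar>a - b\<bar> * \<bar>(\<Sum>i<n. b^(n - Suc i) * a^i)\<bar> \<le> \<bar>a - b\<bar> * (real n * M ^ (n - 1))"
    by (rule mult_left_mono) auto
  thus ?thesis by (simp add: power_diff_sumr2 abs_mult mult_ac)
qed

lemma abs_inverse_power_diff_le:
  fixes L x y :: real
  assumes "0 < L" "L \<le> x" "L \<le> y"
  shows "\<bar>(1/x)^(Suc k) - (1/y)^(Suc k)\<bar> \<le> 2^k * ((1/L)^k * (\<bar>x - y\<bar> / L\<^sup>2))"
proof -
  have x0: "0 < x" "0 < y" using assms by linarith+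
  have inverse_diff: "\<bar>1/x - 1/y\<bar> \<le> \<bar>x - y\<bar> / L\<^sup>2"
  proof -
    have "\<bar>1/x - 1/y\<bar> = \<bar>x - y\<bar> / (x * y)" using x0 by (simp add: field_simps abs_minus_commute)
    also have "\<dots> \<le> \<bar>x - y\<bar> / L\<^sup>2"
    proof (rule divide_left_mono)
      show "L\<^sup>2 \<le> x * y" unfolding power2_eq_square by (rule mult_mono) (use assms in auto)
    qed (use assms x0 in \<open>auto intro!: mult_pos_pos\<close>)
    finally show ?thesis .
  qed
  have "\<bar>(1/x)^(Suc k) - (1/y)^(Suc k)\<bar> \<le> real (Suc k) * (1/L)^(Suc k - 1) * \<bar>1/x - 1/y\<bar>"
  proof (rule abs_power_diff_le)
    show "1/x \<le> 1/L" "1/y \<le> 1/L" using assms x0 by (simp_all add: field_simps)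
  qed (use x0 in auto)
  also have "\<dots> = real (Suc k) * ((1/L)^k * \<bar>1/x - 1/y\<bar>)" by simp
  also have "\<dots> \<le> 2^k * ((1/L)^k * (\<bar>x - y\<bar> / L\<^sup>2))"
  proof (rule mult_mono)
    show "real (Suc k) \<le> 2^k" using less_exp[of k]
      by (metis Suc_leI of_nat_le_iff of_nat_numeral of_nat_power)
    show "(1/L)^k * \<bar>1/x - 1/y\<bar> \<le> (1/L)^k * (\<bar>x - y\<bar> / L\<^sup>2)"
      by (rule mult_left_mono[OF inverse_diff]) (use assms in simp)
  qed (use assms in auto)
  finally show ?thesis .
qed

lemma neumann_sum_lipschitz:
  fixes c :: "nat \<Rightarrow> real" and m L x y :: real
  assumes "\<And>k. \<bar>c k\<bar> \<le> m * m ^ k" "0 \<le> m" "2 * m < L" "L \<le> x" "L \<le> y"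
  shows "\<bar>neumann_sum c x - neumann_sum c y\<bar> \<le> \<bar>x - y\<bar> * (m / (L * (L - 2 * m)))"
proof -
  have L0: "0 < L" using assms by linarith
  have mx: "m < x" "m < y" using assms by linarith+
  have diff_sums: "(\<lambda>k. c k * (1/x)^(Suc k) - c k * (1/y)^(Suc k)) sums (neumann_sum c x - neumann_sum c y)"
    by (rule sums_diff[OF neumann_sum_sums[OF assms(1,2) mx(1)] neumann_sum_sums[OF assms(1,2) mx(2)]])
  define g where "g k = (m / L\<^sup>2 * \<bar>x - y\<bar>) * (2 * m / L)^k" for k
  have term_le: "\<bar>c k * (1/x)^(Suc k) - c k * (1/y)^(Suc k)\<bar> \<le> g k" for k
  proof -
    have "\<bar>c k * (1/x)^(Suc k) - c k * (1/y)^(Suc k)\<bar> = \<bar>c k\<bar> * \<bar>(1/x)^(Suc k) - (1/y)^(Suc k)\<bar>"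
      by (simp only: right_diff_distrib[symmetric] abs_mult)
    also have "\<dots> \<le> (m * m^k) * (2^k * ((1/L)^k * (\<bar>x - y\<bar> / L\<^sup>2)))"
      by (rule mult_mono[OF assms(1) abs_inverse_power_diff_le[OF L0 assms(4,5)]]) (use assms(2) in auto)
    also have "\<dots> = g k" unfolding g_def using L0 by (simp add: power_mult_distrib power_divide field_simps)
    finally show ?thesis .
  qed
  have "norm (2 * m / L) < 1" using assms L0 by (simp add: field_simps)
  hence g_sums: "g sums ((m / L\<^sup>2 * \<bar>x - y\<bar>) * (1 / (1 - 2 * m / L)))"
    unfolding g_def by (intro sums_mult geometric_sums)
  have g_summable: "summable g" using g_sums by (rule sums_summable)
  have abs_summable: "summable (\<lambda>k. \<bar>c k * (1/x)^(Suc k) - c k * (1/y)^(Suc k)\<bar>)"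
    by (rule summable_comparison_test'[where N=0, OF g_summable]) (use term_le in simp)
  have "\<bar>neumann_sum c x - neumann_sum c y\<bar> = \<bar>\<Sum>k. c k * (1/x)^(Suc k) - c k * (1/y)^(Suc k)\<bar>"
    using sums_unique[OF diff_sums] by simp
  also have "\<dots> \<le> (\<Sum>k. \<bar>c k * (1/x)^(Suc k) - c k * (1/y)^(Suc k)\<bar>)"
    by (rule summable_rabs[OF abs_summable])
  also have "\<dots> \<le> (\<Sum>k. g k)" by (rule suminf_le[OF term_le abs_summable g_summable])
  also have "\<dots> = (m / L\<^sup>2 * \<bar>x - y\<bar>) * (1 / (1 - 2 * m / L))" using sums_unique[OF g_sums] by simp
  also have "\<dots> = \<bar>x - y\<bar> * (m / (L * (L - 2 * m)))"
    using L0 assms by (simp add: field_simps power2_eq_square)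
  finally show ?thesis .
qed

lemma neumann_sum_cmult:
  assumes "summable (\<lambda>k. c k * (1/l)^k)"
  shows "neumann_sum (\<lambda>k. s * c k) l = s * neumann_sum c l"
proof -
  have "(\<Sum>k. s * c k * (1/l)^k) = s * (\<Sum>k. c k * (1/l)^k)"
    using suminf_mult[OF assms, of s] by (simp add: mult.assoc)
  thus ?thesis unfolding neumann_sum_def by simp
qed

lemma neumann_sum_lincomb:
  assumes "\<And>i. i \<in> I \<Longrightarrow> summable (\<lambda>k. c i k * (1/l)^k)" "finite I"
  shows "neumann_sum (\<lambda>k. \<Sum>i\<in>I. a i * c i k) l = (\<Sum>i\<in>I. a i * neumann_sum (c i) l)"
proof -
  have "(\<Sum>k. (\<Sum>i\<in>I. a i * c i k) * (1/l)^k) = (\<Sum>k. \<Sum>i\<in>I. a i * (c i k * (1/l)^k))"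
    by (simp add: sum_distrib_right mult.assoc)
  also have "\<dots> = (\<Sum>i\<in>I. \<Sum>k. a i * (c i k * (1/l)^k))"
    by (rule suminf_sum) (rule summable_mult, rule assms(1))
  also have "\<dots> = (\<Sum>i\<in>I. a i * (\<Sum>k. c i k * (1/l)^k))"
    by (rule sum.cong[OF refl], rule suminf_mult, rule assms(1))
  finally show ?thesis unfolding neumann_sum_def by (simp add: sum_distrib_left mult_ac)
qed

lemma neumann_sum_add:
  assumes "summable (\<lambda>k. c k * (1/l)^k)" "summable (\<lambda>k. e k * (1/l)^k)"
  shows "neumann_sum (\<lambda>k. c k + e k) l = neumann_sum c l + neumann_sum e l"
proof -
  have "(\<Sum>k. (c k + e k) * (1/l)^k) = (\<Sum>k. c k * (1/l)^k) + (\<Sum>k. e k * (1/l)^k)"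
    using suminf_add[OF assms] by (simp add: distrib_right)
  thus ?thesis unfolding neumann_sum_def by (simp add: distrib_left)
qed

lemma abs_neumann_sum_le_abs:
  assumes "summable (\<lambda>k. \<bar>c k * (1/l)^k\<bar>)" "0 < l"
  shows "\<bar>neumann_sum c l\<bar> \<le> neumann_sum (\<lambda>k. \<bar>c k\<bar>) l"
proof -
  have "\<bar>\<Sum>k. c k * (1/l)^k\<bar> \<le> (\<Sum>k. \<bar>c k * (1/l)^k\<bar>)" by (rule summable_rabs[OF assms(1)])
  also have "\<dots> = (\<Sum>k. \<bar>c k\<bar> * (1/l)^k)" using assms(2) by (simp add: abs_mult)
  finally have "(1/l) * \<bar>\<Sum>k. c k * (1/l)^k\<bar> \<le> (1/l) * (\<Sum>k. \<bar>c k\<bar> * (1/l)^k)"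
    by (rule mult_left_mono) (use assms(2) in simp)
  thus ?thesis unfolding neumann_sum_def using assms(2) by (simp add: abs_mult)
qed

section \<open>Restriction to the complement of v and \<open>\<sigma> v\<close>\<close>

locale involutive_graph =
  fixes E :: "'a::finite \<Rightarrow> 'a \<Rightarrow> bool" and \<sigma> :: "'a \<Rightarrow> 'a" and v :: 'a
  assumes simple: "simple_graph E" and connected: "connected_graph E"
    and involution: "graph_involution E \<sigma>" and v_moved: "\<sigma> v \<noteq> v"
begin

definition A :: "'a \<Rightarrow> 'a \<Rightarrow> real" where "A = adj_matrix E"
definition Rest :: "'a set" where "Rest = - {v, \<sigma> v}"
definition A_R :: "'a \<Rightarrow> 'a \<Rightarrow> real" where "A_R x y = (if x \<in> Rest \<and> y \<in> Rest then A x y else 0)"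
definition A_R_mult :: "('a \<Rightarrow> real) \<Rightarrow> ('a \<Rightarrow> real)" where "A_R_mult x = (\<lambda>i. \<Sum>j\<in>UNIV. A_R i j * x j)"
definition A_R_pow :: "nat \<Rightarrow> ('a \<Rightarrow> real) \<Rightarrow> ('a \<Rightarrow> real)" where "A_R_pow k x = (A_R_mult ^^ k) x"
definition b_v :: "'a \<Rightarrow> real" where "b_v z = (if z \<in> Rest then A z v else 0)"
definition b_v' :: "'a \<Rightarrow> real" where "b_v' z = (if z \<in> Rest then A z (\<sigma> v) else 0)"
abbreviation m :: real where "m \<equiv> real (max_degree E)"

lemma sigma_sigma[simp]: "\<sigma> (\<sigma> x) = x"
  using involution unfolding graph_involution_def by (metis comp_apply id_apply)

lemma E_sym: "E x y \<Longrightarrow> E y x" using simple unfolding simple_graph_def by blast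
lemma E_irrefl[simp]: "\<not> E x x" using simple unfolding simple_graph_def by blast
lemma E_sigma[simp]: "E (\<sigma> x) (\<sigma> y) \<longleftrightarrow> E x y"
  using involution unfolding graph_involution_def by (metis sigma_sigma)

lemma A_sym: "A x y = A y x" unfolding A_def adj_matrix_def using E_sym by auto
lemma A_nonneg: "0 \<le> A x y" unfolding A_def adj_matrix_def by auto
lemma A_le_1: "A x y \<le> 1" unfolding A_def adj_matrix_def by auto
lemma A_sigma[simp]: "A (\<sigma> x) (\<sigma> y) = A x y" unfolding A_def adj_matrix_def by simp
lemma A_diag[simp]: "A x x = 0" unfolding A_def adj_matrix_def by simp

lemma inj_sigma: "inj \<sigma>" by (metis injI sigma_sigma)
lemma surj_sigma: "surj \<sigma>" by (metis surjI sigma_sigma)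

lemma sum_reindex_sigma: "(\<Sum>j\<in>UNIV. f (\<sigma> j)) = (\<Sum>j\<in>UNIV. (f j :: real))"
proof -
  have "(\<Sum>j\<in>UNIV. f (\<sigma> j)) = sum f (\<sigma> ` UNIV)"
    using sum.reindex[OF inj_sigma, of f] by simp
  also have "\<sigma> ` UNIV = UNIV" using surj_sigma by simp
  finally show ?thesis .
qed

lemma sigma_in_Rest[simp]: "\<sigma> x \<in> Rest \<longleftrightarrow> x \<in> Rest"
  unfolding Rest_def by (auto, metis sigma_sigma)

lemma A_R_sigma[simp]: "A_R (\<sigma> x) (\<sigma> y) = A_R x y" unfolding A_R_def by simp
lemma A_R_sym: "A_R x y = A_R y x" unfolding A_R_def using A_sym by auto
lemma A_R_nonneg: "0 \<le> A_R x y" unfolding A_R_def using A_nonneg by auto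
lemma A_R_le_A: "A_R x y \<le> A x y" unfolding A_R_def using A_nonneg by auto

lemma row_sum_A_le: "(\<Sum>y\<in>UNIV. A x y) \<le> m"
proof -
  have "(\<Sum>y\<in>UNIV. A x y) = real (card {y. E x y})"
    unfolding A_def adj_matrix_def by (simp add: sum.If_cases)
  also have "card {y. E x y} \<le> max_degree E"
    unfolding max_degree_def by (rule Max_ge) auto
  finally show ?thesis by simp
qed

lemma row_sum_A_R_le: "(\<Sum>y\<in>UNIV. A_R x y) \<le> m"
  using sum_mono[of UNIV "A_R x" "A x", OF A_R_le_A] row_sum_A_le[of x] by linarith

lemma col_sum_A_R_le: "(\<Sum>y\<in>UNIV. A_R y x) \<le> m"
  using row_sum_A_R_le[of x] by (simp add: A_R_sym)

lemma m_nonneg: "0 \<le> m" by simp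

lemma A_R_mult_abs_le:
  assumes "\<And>z. \<bar>x z\<bar> \<le> c"
  shows "\<bar>A_R_mult x i\<bar> \<le> m * c"
proof -
  have c0: "0 \<le> c" using assms[of i] by linarith
  have "\<bar>A_R_mult x i\<bar> \<le> (\<Sum>j\<in>UNIV. \<bar>A_R i j * x j\<bar>)" unfolding A_R_mult_def by (rule sum_abs)
  also have "\<dots> \<le> (\<Sum>j\<in>UNIV. A_R i j * c)"
    by (rule sum_mono) (simp add: abs_mult A_R_nonneg assms mult_left_mono)
  also have "\<dots> = (\<Sum>j\<in>UNIV. A_R i j) * c" by (simp add: sum_distrib_right)
  also have "\<dots> \<le> m * c" by (rule mult_right_mono[OF row_sum_A_R_le c0])
  finally show ?thesis .
qed

lemma A_R_mult_l1_le:
  assumes "(\<Sum>z\<in>UNIV. \<bar>x z\<bar>) \<le> c"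
  shows "(\<Sum>i\<in>UNIV. \<bar>A_R_mult x i\<bar>) \<le> m * c"
proof -
  have "(\<Sum>i\<in>UNIV. \<bar>A_R_mult x i\<bar>) \<le> (\<Sum>i\<in>UNIV. \<Sum>j\<in>UNIV. A_R i j * \<bar>x j\<bar>)"
    unfolding A_R_mult_def
    by (rule sum_mono, rule order_trans[OF sum_abs]) (simp add: abs_mult A_R_nonneg)
  also have "\<dots> = (\<Sum>j\<in>UNIV. (\<Sum>i\<in>UNIV. A_R i j) * \<bar>x j\<bar>)"
    by (subst sum.swap) (simp add: sum_distrib_right)
  also have "\<dots> \<le> (\<Sum>j\<in>UNIV. m * \<bar>x j\<bar>)"
    by (rule sum_mono, rule mult_right_mono[OF col_sum_A_R_le]) auto
  also have "\<dots> \<le> m * c" using assms by (simp add: sum_distrib_left[symmetric] mult_left_mono)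
  finally show ?thesis .
qed

lemma A_R_mult_nonneg: "(\<And>z. 0 \<le> x z) \<Longrightarrow> 0 \<le> A_R_mult x i"
  unfolding A_R_mult_def by (auto intro!: sum_nonneg simp: A_R_nonneg)

lemma A_R_mult_outside: "i \<notin> Rest \<Longrightarrow> A_R_mult x i = 0"
  unfolding A_R_mult_def A_R_def by simp

lemma A_R_mult_sigma:
  assumes "\<And>z. x (\<sigma> z) = s * x z"
  shows "A_R_mult x (\<sigma> i) = s * A_R_mult x i"
proof -
  have "A_R_mult x (\<sigma> i) = (\<Sum>j\<in>UNIV. A_R (\<sigma> i) (\<sigma> j) * x (\<sigma> j))"
    unfolding A_R_mult_def by (rule sum_reindex_sigma[symmetric, where f="\<lambda>j. A_R (\<sigma> i) j * x j"])
  also have "\<dots> = s * A_R_mult x i" by (simp add: A_R_mult_def assms sum_distrib_left mult_ac)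
  finally show ?thesis .
qed

lemma A_R_pow_0[simp]: "A_R_pow 0 x = x" unfolding A_R_pow_def by simp
lemma A_R_pow_Suc: "A_R_pow (Suc k) x = A_R_mult (A_R_pow k x)" unfolding A_R_pow_def by simp

lemma A_R_pow_abs_le: "(\<And>z. \<bar>x z\<bar> \<le> c) \<Longrightarrow> \<bar>A_R_pow k x i\<bar> \<le> c * m ^ k"
proof (induction k arbitrary: i)
  case 0 then show ?case by simp
next
  case (Suc k)
  have "\<bar>A_R_mult (A_R_pow k x) i\<bar> \<le> m * (c * m ^ k)" by (rule A_R_mult_abs_le) (rule Suc.IH[OF Suc.prems])
  then show ?case by (simp add: A_R_pow_Suc mult_ac)
qed

lemma A_R_pow_l1_le: "(\<Sum>z\<in>UNIV. \<bar>x z\<bar>) \<le> c \<Longrightarrow> (\<Sum>i\<in>UNIV. \<bar>A_R_pow k x i\<bar>) \<le> m ^ k * c"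
proof (induction k)
  case 0 then show ?case by simp
next
  case (Suc k)
  have "(\<Sum>i\<in>UNIV. \<bar>A_R_mult (A_R_pow k x) i\<bar>) \<le> m * (m ^ k * c)" by (rule A_R_mult_l1_le) (rule Suc.IH[OF Suc.prems])
  then show ?case by (simp add: A_R_pow_Suc mult_ac)
qed

lemma A_R_pow_nonneg: "(\<And>z. 0 \<le> x z) \<Longrightarrow> 0 \<le> A_R_pow k x i"
  by (induction k arbitrary: i) (auto simp: A_R_pow_Suc intro!: A_R_mult_nonneg)

lemma A_R_pow_outside: "(\<And>z. z \<notin> Rest \<Longrightarrow> x z = 0) \<Longrightarrow> i \<notin> Rest \<Longrightarrow> A_R_pow k x i = 0"
  by (cases k) (auto simp: A_R_pow_Suc A_R_mult_outside)

lemma A_R_pow_sigma: "(\<And>z. x (\<sigma> z) = s * x z) \<Longrightarrow> A_R_pow k x (\<sigma> i) = s * A_R_pow k x i"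
proof (induction k arbitrary: i)
  case 0 then show ?case by simp
next
  case (Suc k) then show ?case unfolding A_R_pow_Suc by (intro A_R_mult_sigma) auto
qed

lemma b_v_sigma: "b_v (\<sigma> z) = b_v' z" unfolding b_v_def b_v'_def by (metis A_sigma sigma_in_Rest sigma_sigma)
lemma b_v'_sigma: "b_v' (\<sigma> z) = b_v z" using b_v_sigma[of "\<sigma> z"] by simp
lemma b_v_nonneg: "0 \<le> b_v z" unfolding b_v_def using A_nonneg by auto
lemma b_v'_nonneg: "0 \<le> b_v' z" unfolding b_v'_def using A_nonneg by auto
lemma b_v_le_1: "b_v z \<le> 1" unfolding b_v_def using A_le_1 by auto
lemma b_v'_le_1: "b_v' z \<le> 1" unfolding b_v'_def using A_le_1 by auto
lemma b_v_outside: "z \<notin> Rest \<Longrightarrow> b_v z = 0" unfolding b_v_def by simp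
lemma b_v'_outside: "z \<notin> Rest \<Longrightarrow> b_v' z = 0" unfolding b_v'_def by simp

lemma sum_b_v_le: "(\<Sum>z\<in>UNIV. b_v z) \<le> m"
proof -
  have "(\<Sum>z\<in>UNIV. b_v z) \<le> (\<Sum>z\<in>UNIV. A v z)"
    by (rule sum_mono) (auto simp: b_v_def A_sym A_nonneg)
  with row_sum_A_le[of v] show ?thesis by linarith
qed

lemma sum_b_v'_le: "(\<Sum>z\<in>UNIV. b_v' z) \<le> m"
  using sum_b_v_le sum_reindex_sigma[of b_v] by (simp add: b_v_sigma)

definition resolvent :: "real \<Rightarrow> ('a \<Rightarrow> real) \<Rightarrow> 'a \<Rightarrow> real" where
  "resolvent l x z = neumann_sum (\<lambda>k. A_R_pow k x z) l"

lemma summable_resolvent_terms: "(\<And>z. \<bar>x z\<bar> \<le> c) \<Longrightarrow> m < l \<Longrightarrow> summable (\<lambda>k. A_R_pow k x z * (1/l)^k)"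
  by (rule summable_neumann_terms(2)[OF A_R_pow_abs_le]) auto

lemma abs_resolvent_le: "(\<And>z. \<bar>x z\<bar> \<le> c) \<Longrightarrow> m < l \<Longrightarrow> \<bar>resolvent l x z\<bar> \<le> c / (l - m)"
  unfolding resolvent_def by (rule abs_neumann_sum_le[OF A_R_pow_abs_le]) auto

lemma resolvent_sums: "(\<And>z. \<bar>x z\<bar> \<le> c) \<Longrightarrow> m < l \<Longrightarrow> (\<lambda>k. A_R_pow k x z * (1/l)^(Suc k)) sums resolvent l x z"
  unfolding resolvent_def by (rule neumann_sum_sums[OF A_R_pow_abs_le]) auto

lemma resolvent_equation:
  assumes "\<And>z. \<bar>x z\<bar> \<le> c" "m < l"
  shows "A_R_mult (resolvent l x) z + x z = l * resolvent l x z"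
proof -
  have l0: "0 < l" using assms(2) m_nonneg by linarith
  have "(\<lambda>k. A_R z w * (A_R_pow k x w * (1/l)^(Suc k))) sums (A_R z w * resolvent l x w)" for w
    by (rule sums_mult, rule resolvent_sums[OF assms])
  hence "(\<lambda>k. \<Sum>w\<in>UNIV. A_R z w * (A_R_pow k x w * (1/l)^(Suc k))) sums (\<Sum>w\<in>UNIV. A_R z w * resolvent l x w)"
    by (rule sums_sum)
  moreover have "(\<Sum>w\<in>UNIV. A_R z w * (A_R_pow k x w * (1/l)^(Suc k))) = A_R_pow (Suc k) x z * (1/l)^(Suc k)" for k
    unfolding A_R_pow_Suc A_R_mult_def sum_distrib_right by (simp only: mult.assoc)
  ultimately have s1: "(\<lambda>k. A_R_pow (Suc k) x z * (1/l)^(Suc k)) sums A_R_mult (resolvent l x) z"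
    unfolding A_R_mult_def by simp
  have "(\<lambda>k. l * (A_R_pow k x z * (1/l)^(Suc k))) sums (l * resolvent l x z)"
    by (rule sums_mult, rule resolvent_sums[OF assms])
  moreover have "l * (A_R_pow k x z * (1/l)^(Suc k)) = A_R_pow k x z * (1/l)^k" for k
    using l0 by (simp add: field_simps)
  ultimately have s2: "(\<lambda>k. A_R_pow k x z * (1/l)^k) sums (l * resolvent l x z)" by simp
  from s1 have "(\<lambda>k. A_R_pow k x z * (1/l)^k) sums (A_R_mult (resolvent l x) z + A_R_pow 0 x z * (1/l)^0)"
    using sums_Suc_iff[of "\<lambda>k. A_R_pow k x z * (1/l)^k"] by simp
  with s2 show ?thesis using sums_unique2 by force
qed

lemma resolvent_outside:
  assumes "\<And>z. z \<notin> Rest \<Longrightarrow> x z = 0" "z \<notin> Rest"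
  shows "resolvent l x z = 0"
  unfolding resolvent_def neumann_sum_def using A_R_pow_outside[OF assms] by simp

lemma resolvent_sigma:
  assumes "\<And>z. x (\<sigma> z) = s * x z" "\<And>z. \<bar>x z\<bar> \<le> c" "m < l"
  shows "resolvent l x (\<sigma> z) = s * resolvent l x z"
proof -
  have "(\<lambda>k. A_R_pow k x (\<sigma> z)) = (\<lambda>k. s * A_R_pow k x z)" using A_R_pow_sigma[of x s, OF assms(1)] by simp
  thus ?thesis unfolding resolvent_def using neumann_sum_cmult[OF summable_resolvent_terms[OF assms(2,3)]] by simp
qed

lemma resolvent_l1_le:
  assumes "\<And>z. \<bar>x z\<bar> \<le> c" "(\<Sum>z\<in>UNIV. \<bar>x z\<bar>) \<le> c1" "m < l"
  shows "(\<Sum>z\<in>UNIV. \<bar>resolvent l x z\<bar>) \<le> c1 / (l - m)"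
proof -
  have l0: "0 < l" using assms(3) m_nonneg by linarith
  have "(\<Sum>z\<in>UNIV. \<bar>resolvent l x z\<bar>) \<le> (\<Sum>z\<in>UNIV. neumann_sum (\<lambda>k. \<bar>A_R_pow k x z\<bar>) l)"
    unfolding resolvent_def
    by (rule sum_mono, rule abs_neumann_sum_le_abs[OF summable_neumann_terms(1)[OF A_R_pow_abs_le] l0]) (use assms m_nonneg in auto)
  also have "\<dots> = (\<Sum>z\<in>UNIV. 1 * neumann_sum (\<lambda>k. \<bar>A_R_pow k x z\<bar>) l)" by simp
  also have "\<dots> = neumann_sum (\<lambda>k. \<Sum>z\<in>UNIV. 1 * \<bar>A_R_pow k x z\<bar>) l"
  proof (rule neumann_sum_lincomb[symmetric])
    fix z :: 'a
    have "summable (\<lambda>k. \<bar>A_R_pow k x z * (1/l)^k\<bar>)"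
      by (rule summable_neumann_terms(1)[OF A_R_pow_abs_le]) (use assms m_nonneg in auto)
    thus "summable (\<lambda>k. \<bar>A_R_pow k x z\<bar> * (1/l)^k)" using l0 by (simp add: abs_mult)
  qed simp
  also have "\<dots> \<le> c1 / (l - m)"
  proof (rule order_trans[OF abs_ge_self], rule abs_neumann_sum_le)
    show "\<bar>\<Sum>z\<in>UNIV. 1 * \<bar>A_R_pow k x z\<bar>\<bar> \<le> c1 * m ^ k" for k
      using A_R_pow_l1_le[OF assms(2), of k] by (simp add: mult.commute)
  qed (use assms in auto)
  finally show ?thesis .
qed

lemma A_R_pow_lincomb: "A_R_pow k (\<lambda>z. x z + s * y z) = (\<lambda>i. A_R_pow k x i + s * A_R_pow k y i)"
proof (induction k)
  case 0 then show ?case by simp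
next
  case (Suc k)
  show ?case unfolding A_R_pow_Suc Suc
    by (rule ext) (simp add: A_R_mult_def algebra_simps sum.distrib sum_distrib_left)
qed

text \<open>In the notation of the resolvent, D l = <b_v, (l - A_R)^-1 b_v> and
  J l = <b_v, (l - A_R)^-1 b_v'>.\<close>

definition ret_walks :: "nat \<Rightarrow> real" where "ret_walks k = (\<Sum>z\<in>UNIV. b_v z * A_R_pow k b_v z)"
definition cross_walks :: "nat \<Rightarrow> real" where "cross_walks k = (\<Sum>z\<in>UNIV. b_v z * A_R_pow k b_v' z)"
definition D :: "real \<Rightarrow> real" where "D = neumann_sum ret_walks"
definition J :: "real \<Rightarrow> real" where "J = neumann_sum cross_walks"
definition b_sym :: "real \<Rightarrow> 'a \<Rightarrow> real" where "b_sym s z = b_v z + s * b_v' z"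

lemma walk_sum_bounds:
  assumes "\<And>z. 0 \<le> x z" "\<And>z. x z \<le> 1"
  shows "0 \<le> (\<Sum>z\<in>UNIV. b_v z * A_R_pow k x z)" "(\<Sum>z\<in>UNIV. b_v z * A_R_pow k x z) \<le> m * m ^ k"
proof -
  show "0 \<le> (\<Sum>z\<in>UNIV. b_v z * A_R_pow k x z)"
    by (rule sum_nonneg) (use b_v_nonneg A_R_pow_nonneg assms in auto)
  have "(\<Sum>z\<in>UNIV. b_v z * A_R_pow k x z) \<le> (\<Sum>z\<in>UNIV. b_v z * m ^ k)"
  proof (rule sum_mono, rule mult_left_mono)
    fix z show "A_R_pow k x z \<le> m ^ k" using A_R_pow_abs_le[of x 1 k z] assms by force
  qed (use b_v_nonneg in auto)
  also have "\<dots> = (\<Sum>z\<in>UNIV. b_v z) * m ^ k" by (simp add: sum_distrib_right)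
  also have "\<dots> \<le> m * m ^ k" by (rule mult_right_mono[OF sum_b_v_le]) simp
  finally show "(\<Sum>z\<in>UNIV. b_v z * A_R_pow k x z) \<le> m * m ^ k" .
qed

lemma ret_walks_bounds: "0 \<le> ret_walks k" "\<bar>ret_walks k\<bar> \<le> m * m ^ k"
  using walk_sum_bounds[of b_v k] b_v_nonneg b_v_le_1 unfolding ret_walks_def by auto
lemma cross_walks_bounds: "0 \<le> cross_walks k" "\<bar>cross_walks k\<bar> \<le> m * m ^ k"
  using walk_sum_bounds[of b_v' k] b_v'_nonneg b_v'_le_1 unfolding cross_walks_def by auto

lemma abs_b_sym_le_sum: "s * s = 1 \<Longrightarrow> \<bar>b_sym s z\<bar> \<le> b_v z + b_v' z"
proof -
  assume "s * s = 1"
  hence "s = 1 \<or> s = -1" by (simp add: square_eq_1_iff)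
  hence s1: "\<bar>s\<bar> = 1" by auto
  have "\<bar>b_sym s z\<bar> \<le> \<bar>b_v z\<bar> + \<bar>s * b_v' z\<bar>" unfolding b_sym_def by (rule abs_triangle_ineq)
  also have "\<bar>s * b_v' z\<bar> = \<bar>b_v' z\<bar>" using s1 by (simp add: abs_mult)
  finally show ?thesis using b_v_nonneg[of z] b_v'_nonneg[of z] by simp
qed

lemma abs_b_sym_le: "s * s = 1 \<Longrightarrow> \<bar>b_sym s z\<bar> \<le> 2"
  using abs_b_sym_le_sum[of s z] b_v_le_1[of z] b_v'_le_1[of z] by linarith

lemma sum_abs_b_sym_le: "s * s = 1 \<Longrightarrow> (\<Sum>z\<in>UNIV. \<bar>b_sym s z\<bar>) \<le> 2 * m"
proof -
  assume s: "s * s = 1"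
  have "(\<Sum>z\<in>UNIV. \<bar>b_sym s z\<bar>) \<le> (\<Sum>z\<in>UNIV. b_v z + b_v' z)"
    by (rule sum_mono) (rule abs_b_sym_le_sum[OF s])
  also have "\<dots> \<le> 2 * m" using sum_b_v_le sum_b_v'_le by (simp add: sum.distrib)
  finally show ?thesis .
qed

lemma b_sym_sigma: "s * s = 1 \<Longrightarrow> b_sym s (\<sigma> z) = s * b_sym s z"
  unfolding b_sym_def by (simp add: b_v_sigma b_v'_sigma algebra_simps)

lemma b_sym_outside: "z \<notin> Rest \<Longrightarrow> b_sym s z = 0" unfolding b_sym_def by (simp add: b_v_outside b_v'_outside)

lemma resolvent_coupling_eq:
  assumes "s * s = 1" "m < l"
  shows "(\<Sum>z\<in>UNIV. b_v z * resolvent l (b_sym s) z) = D l + s * J l"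
proof -
  have "(\<Sum>z\<in>UNIV. b_v z * resolvent l (b_sym s) z) = neumann_sum (\<lambda>k. \<Sum>z\<in>UNIV. b_v z * A_R_pow k (b_sym s) z) l"
    unfolding resolvent_def by (rule neumann_sum_lincomb[symmetric]) (use summable_resolvent_terms[OF abs_b_sym_le[OF assms(1)] assms(2)] in auto)
  also have "(\<lambda>k. \<Sum>z\<in>UNIV. b_v z * A_R_pow k (b_sym s) z) = (\<lambda>k. ret_walks k + s * cross_walks k)"
    unfolding b_sym_def A_R_pow_lincomb ret_walks_def cross_walks_def by (simp add: algebra_simps sum.distrib sum_distrib_left)
  also have "neumann_sum (\<lambda>k. ret_walks k + s * cross_walks k) l = D l + s * J l"
  proof -
    have sd: "summable (\<lambda>k. ret_walks k * (1/l)^k)" by (rule summable_neumann_terms(2)[OF ret_walks_bounds(2)]) (use assms in auto)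
    have sj: "summable (\<lambda>k. cross_walks k * (1/l)^k)" by (rule summable_neumann_terms(2)[OF cross_walks_bounds(2)]) (use assms in auto)
    have sj': "summable (\<lambda>k. s * cross_walks k * (1/l)^k)" using summable_mult[OF sj, of s] by (simp add: mult.assoc)
    show ?thesis unfolding D_def J_def using neumann_sum_add[OF sd sj'] neumann_sum_cmult[OF sj] by simp
  qed
  finally show ?thesis .
qed

lemma A_R_pow_ge_1_of_walk:
  "(\<And>i. i \<le> k \<Longrightarrow> g i \<in> Rest) \<Longrightarrow> (\<And>i. i < k \<Longrightarrow> E (g i) (g (Suc i))) \<Longrightarrow> E (g k) (\<sigma> v)
   \<Longrightarrow> 1 \<le> A_R_pow k b_v' (g 0)"
proof (induction k arbitrary: g)
  case 0
  then show ?case by (simp add: b_v'_def A_def adj_matrix_def)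
next
  case (Suc k)
  have ih: "1 \<le> A_R_pow k b_v' (g (Suc 0))"
    using Suc.IH[of "\<lambda>i. g (Suc i)"] Suc.prems by auto
  have a: "A_R (g 0) (g 1) = 1" using Suc.prems(1)[of 0] Suc.prems(1)[of 1] Suc.prems(2)[of 0]
    by (simp add: A_R_def A_def adj_matrix_def)
  have "A_R (g 0) (g 1) * A_R_pow k b_v' (g 1) \<le> (\<Sum>w\<in>UNIV. A_R (g 0) w * A_R_pow k b_v' w)"
    by (rule member_le_sum) (auto intro!: mult_nonneg_nonneg A_R_nonneg A_R_pow_nonneg b_v'_nonneg)
  then show ?case using a ih by (simp add: A_R_pow_Suc A_R_mult_def)
qed

definition vdist where "vdist = graph_dist E v (\<sigma> v)"

lemma vdist_props:
  shows "1 \<le> vdist" "(E ^^ vdist) v (\<sigma> v)" "\<And>n. n < vdist \<Longrightarrow> \<not> (E ^^ n) v (\<sigma> v)"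
proof -
  have ex: "\<exists>n. (E ^^ n) v (\<sigma> v)"
    using connected unfolding connected_graph_def by (simp add: rtranclp_imp_relpowp)
  show dp: "(E ^^ vdist) v (\<sigma> v)" unfolding vdist_def graph_dist_def by (rule LeastI_ex[OF ex])
  show "\<And>n. n < vdist \<Longrightarrow> \<not> (E ^^ n) v (\<sigma> v)" unfolding vdist_def graph_dist_def
    by (rule not_less_Least)
  show "1 \<le> vdist"
  proof (rule ccontr)
    assume "\<not> 1 \<le> vdist" hence "vdist = 0" by simp
    with dp v_moved show False by simp
  qed
qed

lemma vdist_1: "vdist = 1 \<Longrightarrow> A v (\<sigma> v) = 1"
  using vdist_props(2) by (auto simp: A_def adj_matrix_def relcompp_apply)

lemma shortest_path_through_Rest:
  obtains f where "f 0 = v" "f vdist = \<sigma> v" "\<And>i. i < vdist \<Longrightarrow> E (f i) (f (Suc i))"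
    "\<And>i. 0 < i \<Longrightarrow> i < vdist \<Longrightarrow> f i \<in> Rest"
proof -
  obtain f where f: "f 0 = v" "f vdist = \<sigma> v" "\<And>i. i < vdist \<Longrightarrow> E (f i) (f (Suc i))"
    using vdist_props(2) unfolding relpowp_fun_conv by blast
  have "f i \<in> Rest" if "0 < i" "i < vdist" for i
  proof -
    have "f i \<noteq> v"
    proof
      assume fi: "f i = v"
      have "(E ^^ (vdist - i)) v (\<sigma> v)" unfolding relpowp_fun_conv
      proof (rule exI[of _ "\<lambda>j. f (i + j)"], intro conjI allI impI)
        show "f (i + 0) = v" using fi by simp
        show "f (i + (vdist - i)) = \<sigma> v" using that f(2) by simp
        fix j assume "j < vdist - i"
        hence "i + j < vdist" by simp
        from f(3)[OF this] show "E (f (i + j)) (f (i + Suc j))" by simp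
      qed
      with vdist_props(3)[of "vdist - i"] that show False by simp
    qed
    moreover have "f i \<noteq> \<sigma> v"
    proof
      assume fi: "f i = \<sigma> v"
      have "(E ^^ i) v (\<sigma> v)" unfolding relpowp_fun_conv
      proof (rule exI[of _ f], intro conjI allI impI)
        show "f 0 = v" "f i = \<sigma> v" using f(1) fi by auto
        fix j assume "j < i"
        with that have "j < vdist" by simp
        from f(3)[OF this] show "E (f j) (f (Suc j))" .
      qed
      with vdist_props(3)[of i] that show False by simp
    qed
    ultimately show ?thesis unfolding Rest_def by simp
  qed
  with f that show thesis by blast
qed

lemma vdist_ge_2:
  assumes "2 \<le> vdist"
  shows "A v (\<sigma> v) = 0" "1 \<le> cross_walks (vdist - 2)" "1 \<le> m"
proof -
  have "\<not> (E ^^ 1) v (\<sigma> v)" using vdist_props(3)[of 1] assms by simp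
  thus "A v (\<sigma> v) = 0" by (auto simp: A_def adj_matrix_def relcompp_apply)
  obtain f where f: "f 0 = v" "f vdist = \<sigma> v" "\<And>i. i < vdist \<Longrightarrow> E (f i) (f (Suc i))"
    and in_Rest: "\<And>i. 0 < i \<Longrightarrow> i < vdist \<Longrightarrow> f i \<in> Rest"
    using shortest_path_through_Rest by blast
  have walk: "1 \<le> A_R_pow (vdist - 2) b_v' ((\<lambda>i. f (Suc i)) 0)"
  proof (rule A_R_pow_ge_1_of_walk)
    show "f (Suc i) \<in> Rest" if "i \<le> vdist - 2" for i using in_Rest[of "Suc i"] that assms by auto
    show "E (f (Suc i)) (f (Suc (Suc i)))" if "i < vdist - 2" for i using f(3)[of "Suc i"] that by auto
    have "Suc (vdist - 2) = vdist - 1" "Suc (vdist - 1) = vdist" "vdist - 1 < vdist" using assms by auto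
    thus "E (f (Suc (vdist - 2))) (\<sigma> v)" using f(3)[of "vdist - 1"] f(2) by simp
  qed
  have first_step: "E v (f 1)" using f(3)[of 0] f(1) assms by simp
  hence "b_v (f 1) = 1" using in_Rest[of 1] assms E_sym by (simp add: b_v_def A_def adj_matrix_def)
  moreover have "b_v (f 1) * A_R_pow (vdist - 2) b_v' (f 1) \<le> cross_walks (vdist - 2)"
    unfolding cross_walks_def
    by (rule member_le_sum) (auto intro!: mult_nonneg_nonneg A_R_pow_nonneg b_v'_nonneg b_v_nonneg)
  ultimately show "1 \<le> cross_walks (vdist - 2)" using walk by simp
  have "A v (f 1) \<le> (\<Sum>y\<in>UNIV. A v y)" by (rule member_le_sum) (auto simp: A_nonneg)
  thus "1 \<le> m" using row_sum_A_le[of v] first_step by (simp add: A_def adj_matrix_def)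
qed

abbreviation H :: "real \<Rightarrow> 'a \<Rightarrow> 'a \<Rightarrow> real" where
  "H Q \<equiv> hamiltonian E Q v (\<sigma> v)"

lemma H_sym: "H Q x y = H Q y x"
  unfolding hamiltonian_def A_def[symmetric] using A_sym by auto

lemma v_notin_Rest: "v \<notin> Rest" "\<sigma> v \<notin> Rest" unfolding Rest_def by auto

lemma H_mult:
  "(\<Sum>z\<in>UNIV. H Q x z * \<phi> z) = (\<Sum>z\<in>UNIV. A x z * \<phi> z) + (if x = v \<or> x = \<sigma> v then Q * \<phi> x else 0)"
proof -
  have "(\<Sum>z\<in>UNIV. H Q x z * \<phi> z) = (\<Sum>z\<in>UNIV. A x z * \<phi> z + (if x = z \<and> (x = v \<or> x = \<sigma> v) then Q * \<phi> z else 0))"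
    unfolding hamiltonian_def A_def[symmetric] by (rule sum.cong) (auto simp: algebra_simps)
  also have "\<dots> = (\<Sum>z\<in>UNIV. A x z * \<phi> z) + (\<Sum>z\<in>UNIV. (if x = z \<and> (x = v \<or> x = \<sigma> v) then Q * \<phi> z else 0))"
    by (rule sum.distrib)
  also have "(\<Sum>z\<in>UNIV. (if x = z \<and> (x = v \<or> x = \<sigma> v) then Q * \<phi> z else 0)) = (if x = v \<or> x = \<sigma> v then Q * \<phi> x else 0)"
    by (cases "x = v \<or> x = \<sigma> v") simp_all
  finally show ?thesis .
qed

definition trial_vector :: "real \<Rightarrow> real \<Rightarrow> 'a \<Rightarrow> real" where
  "trial_vector s l z = (if z = v then 1 else 0) + s * (if z = \<sigma> v then 1 else 0) + resolvent l (b_sym s) z"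

lemma trial_vector_at_v: "trial_vector s l v = 1"
  using resolvent_outside[of "b_sym s" v l] b_sym_outside v_notin_Rest v_moved
  by (simp add: trial_vector_def)

lemma resolvent_coupling_sigma:
  assumes s: "s * s = 1" and ml: "m < l"
  shows "(\<Sum>z\<in>UNIV. b_v' z * resolvent l (b_sym s) z) = s * (\<Sum>z\<in>UNIV. b_v z * resolvent l (b_sym s) z)"
proof -
  have "(\<Sum>z\<in>UNIV. b_v' z * resolvent l (b_sym s) z)
      = (\<Sum>z\<in>UNIV. b_v' (\<sigma> z) * resolvent l (b_sym s) (\<sigma> z))"
    by (rule sum_reindex_sigma[symmetric, where f="\<lambda>z. b_v' z * resolvent l (b_sym s) z"])
  also have "\<dots> = s * (\<Sum>z\<in>UNIV. b_v z * resolvent l (b_sym s) z)"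
    using resolvent_sigma[of "b_sym s" s 2 l, OF b_sym_sigma[OF s] abs_b_sym_le[OF s] ml]
    by (simp add: b_v'_sigma sum_distrib_left mult_ac)
  finally show ?thesis .
qed

text \<open>The rows of \<open>H\<close> at v and at \<open>\<sigma> v\<close> impose the same condition on the trial vector
  (by its s-symmetry under \<open>\<sigma>\<close>), namely the secular equation; on the rest the condition is
  the resolvent equation.\<close>

lemma secular_root_eigenvector:
  assumes s: "s * s = 1" and ml: "m < l"
    and root: "l = Q + s * A v (\<sigma> v) + D l + s * J l"
  shows "(\<Sum>z\<in>UNIV. H Q x z * trial_vector s l z) = l * trial_vector s l x"
proof -
  define Yb where "Yb = resolvent l (b_sym s)"
  have Yb_outside: "z \<notin> Rest \<Longrightarrow> Yb z = 0" for z
    unfolding Yb_def by (rule resolvent_outside) (auto simp: b_sym_outside)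
  have Yb_v: "Yb v = 0" "Yb (\<sigma> v) = 0" and v_ne: "v \<noteq> \<sigma> v"
    using Yb_outside v_notin_Rest v_moved by auto
  have A_mult: "(\<Sum>z\<in>UNIV. A x z * trial_vector s l z) = A x v + s * A x (\<sigma> v) + (\<Sum>z\<in>UNIV. A x z * Yb z)"
    unfolding trial_vector_def Yb_def[symmetric]
    by (simp add: algebra_simps sum.distrib if_distrib[where f="\<lambda>a. _ * a"] cong: if_cong)
  have coupling_v: "(\<Sum>z\<in>UNIV. A v z * Yb z) = l - Q - s * A v (\<sigma> v)"
  proof -
    have "(\<Sum>z\<in>UNIV. A v z * Yb z) = (\<Sum>z\<in>UNIV. b_v z * Yb z)"
      by (rule sum.cong) (auto simp: b_v_def Yb_outside A_sym)
    thus ?thesis using resolvent_coupling_eq[OF s ml] root unfolding Yb_def by simp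
  qed
  have coupling_v': "(\<Sum>z\<in>UNIV. A (\<sigma> v) z * Yb z) = s * (l - Q - s * A v (\<sigma> v))"
  proof -
    have "(\<Sum>z\<in>UNIV. A (\<sigma> v) z * Yb z) = (\<Sum>z\<in>UNIV. b_v' z * Yb z)"
      by (rule sum.cong) (auto simp: b_v'_def Yb_outside A_sym)
    thus ?thesis using resolvent_coupling_sigma[OF s ml] resolvent_coupling_eq[OF s ml] root
      unfolding Yb_def by simp
  qed
  consider "x = v" | "x = \<sigma> v" | "x \<in> Rest" unfolding Rest_def by auto
  thus ?thesis
  proof cases
    case 1
    then show ?thesis unfolding H_mult A_mult using coupling_v Yb_v v_ne by (simp add: trial_vector_def Yb_def)
  next
    case 2
    have "A v (\<sigma> v) + s * (l - Q - s * A v (\<sigma> v)) + Q * s = l * s" using s by algebra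
    then show ?thesis unfolding H_mult A_mult using 2 coupling_v' Yb_v v_ne A_sym[of "\<sigma> v" v]
      by (simp add: trial_vector_def Yb_def)
  next
    case 3
    have "(\<Sum>z\<in>UNIV. A x z * Yb z) = A_R_mult Yb x"
      unfolding A_R_mult_def using 3 by (intro sum.cong) (auto simp: A_R_def Yb_outside)
    moreover have "A_R_mult Yb x + b_sym s x = l * Yb x"
      unfolding Yb_def by (rule resolvent_equation[OF abs_b_sym_le[OF s] ml])
    moreover have "b_sym s x = A x v + s * A x (\<sigma> v)" using 3 by (simp add: b_sym_def b_v_def b_v'_def)
    ultimately show ?thesis unfolding H_mult A_mult using 3 v_notin_Rest
      by (auto simp: trial_vector_def Yb_def)
  qed
qed

definition U :: "real \<Rightarrow> real \<Rightarrow> 'a \<Rightarrow> 'a \<Rightarrow> complex" where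
  "U Q t = mat_exp (\<lambda>x y. \<i> * complex_of_real (t * H Q x y))"

lemma U_unitary: "(\<Sum>z\<in>UNIV. cnj (U Q t z x) * U Q t z y) = (if x = y then 1 else 0)"
proof -
  define c where "c = \<i> * complex_of_real t"
  define P where "P = (\<lambda>x y. complex_of_real (H Q x y))"
  have U: "U Q t = mat_exp (\<lambda>x y. c * P x y)" unfolding U_def c_def P_def by (simp add: mult_ac)
  have "cnj (U Q t z x) = mat_exp (\<lambda>x y. - c * P x y) x z" for z
  proof -
    have "cnj (U Q t z x) = mat_exp (\<lambda>x y. cnj (c * P x y)) z x" unfolding U by (rule mat_exp_cnj)
    also have "(\<lambda>x y. cnj (c * P x y)) = (\<lambda>x y. - c * P x y)" unfolding c_def P_def by simp
    also have "mat_exp (\<lambda>x y. - c * P x y) z x = mat_exp (\<lambda>x y. - c * P x y) x z"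
      by (rule mat_exp_symmetric) (simp add: P_def H_sym)
    finally show ?thesis .
  qed
  hence "(\<Sum>z\<in>UNIV. cnj (U Q t z x) * U Q t z y) = (\<Sum>z\<in>UNIV. mat_exp (\<lambda>x y. - c * P x y) x z * mat_exp (\<lambda>x y. c * P x y) z y)"
    unfolding U by simp
  also have "\<dots> = (if x = y then 1 else 0)" by (rule mat_exp_uminus_inverse)
  finally show ?thesis .
qed

lemma U_eigenvector:
  assumes "\<And>x. (\<Sum>z\<in>UNIV. H Q x z * \<phi> z) = l * \<phi> x"
  shows "(\<Sum>z\<in>UNIV. U Q t x z * complex_of_real (\<phi> z)) = exp (\<i> * complex_of_real (t * l)) * complex_of_real (\<phi> x)"
  unfolding U_def
proof (rule mat_exp_eigenvector)
  fix x
  have "(\<Sum>z\<in>UNIV. \<i> * complex_of_real (t * H Q x z) * complex_of_real (\<phi> z))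
      = \<i> * complex_of_real t * complex_of_real (\<Sum>z\<in>UNIV. H Q x z * \<phi> z)"
    by (simp add: sum_distrib_left mult_ac)
  also have "\<dots> = \<i> * complex_of_real (t * l) * complex_of_real (\<phi> x)" using assms by (simp add: mult_ac)
  finally show "(\<Sum>z\<in>UNIV. \<i> * complex_of_real (t * H Q x z) * complex_of_real (\<phi> z))
      = \<i> * complex_of_real (t * l) * complex_of_real (\<phi> x)" .
qed

lemma norm_U_mult_le:
  "(cmod (\<Sum>z\<in>UNIV. U Q t x z * complex_of_real (w z)))\<^sup>2 \<le> (\<Sum>z\<in>UNIV. (w z)\<^sup>2)"
proof -
  have "(cmod (\<Sum>z\<in>UNIV. U Q t x z * complex_of_real (w z)))\<^sup>2
      \<le> (\<Sum>x\<in>UNIV. (cmod (\<Sum>z\<in>UNIV. U Q t x z * complex_of_real (w z)))\<^sup>2)"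
    by (rule member_le_sum) auto
  also have "\<dots> = (\<Sum>z\<in>UNIV. (cmod (complex_of_real (w z)))\<^sup>2)"
    by (rule unitary_sum_norm2_eq[OF U_unitary])
  also have "\<dots> = (\<Sum>z\<in>UNIV. (w z)\<^sup>2)" by simp
  finally show ?thesis .
qed

lemma U_transfer_amplitude:
  assumes "\<And>x. (\<Sum>z\<in>UNIV. H Q x z * \<phi> z) = l * \<phi> x" "\<phi> v = 1"
    and "\<And>x. (\<Sum>z\<in>UNIV. H Q x z * \<psi> z) = l' * \<psi> x" "\<psi> v = 1"
  shows "U Q t v (\<sigma> v) = (exp (\<i> * complex_of_real (t * l)) - exp (\<i> * complex_of_real (t * l'))) / 2
           - (\<Sum>z\<in>UNIV. U Q t v z * complex_of_real ((\<phi> z - \<psi> z) / 2 - (if z = \<sigma> v then 1 else 0)))"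
proof -
  have "U Q t v (\<sigma> v) = (\<Sum>z\<in>UNIV. if z = \<sigma> v then U Q t v z else 0)"
    by simp
  also have "\<dots> = (\<Sum>z\<in>UNIV. U Q t v z * complex_of_real (if z = \<sigma> v then 1 else 0))"
    by (rule sum.cong) auto
  also have "\<dots> = ((\<Sum>z\<in>UNIV. U Q t v z * complex_of_real (\<phi> z))
                  - (\<Sum>z\<in>UNIV. U Q t v z * complex_of_real (\<psi> z))) / 2
           - (\<Sum>z\<in>UNIV. U Q t v z * complex_of_real ((\<phi> z - \<psi> z) / 2 - (if z = \<sigma> v then 1 else 0)))"
    by (simp add: sum_subtractf sum_divide_distrib[symmetric] algebra_simps)
  finally show ?thesis
    using U_eigenvector[OF assms(1), of t v] U_eigenvector[OF assms(3), of t v] assms(2,4) by simp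
qed

end

lemma half_exp_diff_norm_ge:
  fixes a b \<eta> :: real
  assumes "a - b = pi - \<eta>"
  shows "1 - \<eta>\<^sup>2 / 4 \<le> cmod ((exp (\<i> * complex_of_real a) - exp (\<i> * complex_of_real b)) / 2)"
proof -
  have e: "exp (\<i> * complex_of_real a) = exp (\<i> * complex_of_real b) * exp (\<i> * complex_of_real (a - b))"
    by (simp add: exp_add[symmetric] algebra_simps)
  have e2: "exp (\<i> * complex_of_real a) - exp (\<i> * complex_of_real b)
      = exp (\<i> * complex_of_real b) * (exp (\<i> * complex_of_real (a - b)) - 1)"
    by (subst e) (simp only: right_diff_distrib mult_1_right)
  have "cmod (exp (\<i> * complex_of_real a) - exp (\<i> * complex_of_real b))
      = cmod (exp (\<i> * complex_of_real (a - b)) - 1)"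
    unfolding e2 norm_mult norm_exp_i_times by simp
  also have "\<dots> \<ge> \<bar>Re (exp (\<i> * complex_of_real (a - b)) - 1)\<bar>" by (rule abs_Re_le_cmod)
  finally have 1: "\<bar>cos (a - b) - 1\<bar> \<le> cmod (exp (\<i> * complex_of_real a) - exp (\<i> * complex_of_real b))"
    by (simp add: Re_exp)
  have "cos (a - b) = - cos \<eta>" using assms by simp
  moreover have "cos \<eta> \<ge> 1 - \<eta>\<^sup>2 / 2"
  proof -
    have "cos \<eta> = 1 - 2 * sin (\<eta>/2) ^ 2" using cos_double_sin[of "\<eta>/2"] by simp
    moreover have "sin (\<eta>/2) ^ 2 \<le> (\<eta>/2)^2"
      using abs_sin_x_le_abs_x[of "\<eta>/2"] by (metis power2_abs power_mono abs_ge_zero)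
    ultimately show ?thesis by (simp add: power_divide)
  qed
  ultimately have "2 - \<eta>\<^sup>2 / 2 \<le> \<bar>cos (a - b) - 1\<bar>" by simp
  with 1 show ?thesis by (simp add: norm_divide)
qed

lemma lower_bound_under_relative_error:
  fixes \<Delta> G e S :: real
  assumes "\<Delta> = G + e" "\<bar>e\<bar> \<le> \<bar>\<Delta>\<bar> * S" "0 \<le> S" "S < 1" "0 < G"
  shows "0 < \<Delta>" "G \<le> \<Delta> * (1 + S)"
proof -
  show pos: "0 < \<Delta>"
  proof (rule ccontr)
    assume "\<not> 0 < \<Delta>"
    hence "G \<le> \<Delta> * (1 - S)" using assms(1,2) by (simp add: algebra_simps abs_le_iff)
    moreover have "\<Delta> * (1 - S) \<le> 0" using \<open>\<not> 0 < \<Delta>\<close> assms(4) by (simp add: mult_nonpos_nonneg)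
    ultimately show False using assms(5) by linarith
  qed
  show "G \<le> \<Delta> * (1 + S)" using pos assms(1,2) by (simp add: algebra_simps abs_le_iff)
qed

lemma pi_defect_le:
  fixes q :: real
  assumes "0 \<le> q" "q \<le> 1"
  shows "0 \<le> pi - pi / (1 + q)\<^sup>2" "pi - pi / (1 + q)\<^sup>2 \<le> 12 * q"
proof -
  have sq: "1 \<le> (1 + q)\<^sup>2" using assms by (simp add: one_le_power)
  have "pi / (1 + q)\<^sup>2 \<le> pi / 1" by (rule divide_left_mono) (use sq in auto)
  thus "0 \<le> pi - pi / (1 + q)\<^sup>2" by simp
  have "pi - pi / (1 + q)\<^sup>2 = pi * ((1 + q)\<^sup>2 - 1) / (1 + q)\<^sup>2"
    using assms(1) by (simp add: right_diff_distrib diff_divide_distrib)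
  also have "\<dots> \<le> pi * ((1 + q)\<^sup>2 - 1) / 1"
    by (rule divide_left_mono) (use sq in auto)
  also have "\<dots> \<le> 4 * (3 * q)"
  proof -
    have "q * q \<le> q" using assms by (simp add: mult_left_le)
    hence "(1 + q)\<^sup>2 - 1 \<le> 3 * q" by (simp add: power2_eq_square algebra_simps)
    thus ?thesis using sq pi_less_4 by (simp only: div_by_1, intro mult_mono) auto
  qed
  finally show "pi - pi / (1 + q)\<^sup>2 \<le> 12 * q" by simp
qed

lemma one_minus_le_power2:
  fixes x \<eta> r \<epsilon> :: real
  assumes "1 - \<eta>\<^sup>2 / 4 - r \<le> x" "\<eta>\<^sup>2 \<le> \<epsilon>" "r \<le> \<epsilon> / 4" "\<epsilon> < 1"
  shows "1 - \<epsilon> \<le> x\<^sup>2"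
proof -
  have "(1 - \<epsilon>/2)\<^sup>2 \<le> x\<^sup>2" using assms by (intro power_mono) auto
  moreover have "1 - \<epsilon> \<le> (1 - \<epsilon>/2)\<^sup>2" by (simp add: power2_eq_square algebra_simps)
  ultimately show ?thesis by linarith
qed

section \<open>Large potential\<close>

locale strong_potential = involutive_graph E \<sigma> v for E :: "'a::finite \<Rightarrow> 'a \<Rightarrow> bool" and \<sigma> v +
  fixes Q \<epsilon> :: real
  assumes eps_pos: "0 < \<epsilon>" and eps_less_1: "\<epsilon> < 1"
    and Q_large: "Q \<ge> 256 * (real (max_degree E) + 1) / \<epsilon>\<^sup>2"
begin

lemma Q_eps_ge: "256 * m + 256 \<le> Q * \<epsilon>\<^sup>2"
  using Q_large eps_pos by (simp add: divide_le_eq algebra_simps)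

lemma Q_ge: "256 * m + 256 \<le> Q"
proof -
  have "0 \<le> Q" using Q_large order_trans[OF _ Q_large] by simp
  moreover have "\<epsilon>\<^sup>2 \<le> 1" using eps_pos eps_less_1 by (simp add: power_le_one)
  ultimately have "Q * \<epsilon>\<^sup>2 \<le> Q" by (simp add: mult_left_le)
  thus ?thesis using Q_eps_ge by simp
qed

definition L :: real where "L = Q - 2"

lemma L_ge: "254 + 256 * m \<le> L"
  unfolding L_def using Q_ge by simp

lemma D_J_bounds:
  assumes "L \<le> l"
  shows "0 \<le> D l" "D l \<le> 1/2" "0 \<le> J l" "J l \<le> 1/2"
proof -
  have ml: "m < l" using assms L_ge by simp
  have "m \<le> 1/2 * (l - m)" using assms L_ge by simp
  hence half: "m / (l - m) \<le> 1/2" using ml by (simp add: pos_divide_le_eq)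
  show "0 \<le> D l" unfolding D_def
    by (rule neumann_sum_nonneg[OF ret_walks_bounds(2) _ ml ret_walks_bounds(1)]) simp
  show "0 \<le> J l" unfolding J_def
    by (rule neumann_sum_nonneg[OF cross_walks_bounds(2) _ ml cross_walks_bounds(1)]) simp
  have "\<bar>D l\<bar> \<le> m / (l - m)" unfolding D_def
    by (rule abs_neumann_sum_le[OF ret_walks_bounds(2) _ ml]) simp
  thus "D l \<le> 1/2" using half by linarith
  have "\<bar>J l\<bar> \<le> m / (l - m)" unfolding J_def
    by (rule abs_neumann_sum_le[OF cross_walks_bounds(2) _ ml]) simp
  thus "J l \<le> 1/2" using half by linarith
qed

definition secular_root :: "real \<Rightarrow> real \<Rightarrow> bool" where
  "secular_root s l \<longleftrightarrow> L \<le> l \<and> l \<le> Q + 2 \<and> l = Q + s * A v (\<sigma> v) + D l + s * J l"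

lemma secular_root_exists:
  assumes s: "s = 1 \<or> s = -1"
  shows "\<exists>l. secular_root s l"
proof -
  define h where "h l = l - (Q + s * A v (\<sigma> v) + D l + s * J l)" for l
  have LQ: "L \<le> Q + 2" unfolding L_def by simp
  have shift: "\<bar>s * A v (\<sigma> v) + D l + s * J l\<bar> \<le> 2" if "L \<le> l" for l
    using D_J_bounds[OF that] A_nonneg[of v "\<sigma> v"] A_le_1[of v "\<sigma> v"] s by auto
  have "h L \<le> 0" unfolding h_def using shift[of L] by (simp add: L_def abs_le_iff)
  moreover have "0 \<le> h (Q + 2)" unfolding h_def using shift[of "Q + 2"] LQ by (simp add: abs_le_iff)
  moreover have "\<forall>x. L \<le> x \<and> x \<le> Q + 2 \<longrightarrow> isCont h x"
  proof (intro allI impI)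
    fix x assume "L \<le> x \<and> x \<le> Q + 2"
    hence x: "2 * m + 1 < x" using L_ge by simp
    have "isCont D x" unfolding D_def by (rule isCont_neumann_sum[OF ret_walks_bounds(2) _ x]) simp
    moreover have "isCont J x" unfolding J_def by (rule isCont_neumann_sum[OF cross_walks_bounds(2) _ x]) simp
    ultimately show "isCont h x" unfolding h_def[abs_def] by (intro continuous_intros)
  qed
  ultimately obtain l where "L \<le> l" "l \<le> Q + 2" "h l = 0"
    using IVT[of h L 0 "Q + 2"] LQ by auto
  thus ?thesis unfolding h_def secular_root_def by auto
qed

lemma secular_root_trial_vector:
  assumes "s = 1 \<or> s = -1" "secular_root s l"
  shows "(\<Sum>z\<in>UNIV. H Q x z * trial_vector s l z) = l * trial_vector s l x"
  using assms L_ge unfolding secular_root_def by (intro secular_root_eigenvector) auto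

text \<open>J counts the walks from v to \<open>\<sigma> v\<close> through the rest, weighted by \<open>l^-(k+1)\<close>; a
  shortest path contributes at least \<open>l^-(vdist - 1)\<close>.\<close>

lemma J_ge_shortest_path:
  assumes "2 \<le> vdist" "L \<le> l" "l \<le> Q + m"
  shows "1 / (Q + m) ^ (vdist - 1) \<le> J l"
proof -
  have ml: "m < l" using assms(2) L_ge by simp
  have l0: "0 < l" using ml m_nonneg by linarith
  have "1 / (Q + m) ^ (vdist - 1) = (1 / (Q + m)) ^ (vdist - 1)" by (simp add: power_one_over)
  also have "\<dots> \<le> (1/l) ^ (vdist - 1)"
    by (rule power_mono) (use assms l0 in \<open>auto simp: divide_simps\<close>)
  also have "\<dots> \<le> cross_walks (vdist - 2) * (1/l) ^ Suc (vdist - 2)"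
    using vdist_ge_2(2)[OF assms(1)] l0 assms(1) by (simp add: Suc_diff_Suc numeral_2_eq_2)
  also have "\<dots> \<le> J l" unfolding J_def
    by (rule neumann_sum_ge_term[OF cross_walks_bounds(2) m_nonneg ml cross_walks_bounds(1)])
  finally show ?thesis .
qed

lemma gap_numerator_ge:
  assumes "secular_root 1 lp" "secular_root (-1) lm"
  shows "2 / (Q + m) ^ (vdist - 1) \<le> 2 * A v (\<sigma> v) + J lp + J lm"
proof (cases "vdist = 1")
  case True
  then show ?thesis
    using vdist_1 D_J_bounds assms unfolding secular_root_def by simp
next
  case False
  hence d2: "2 \<le> vdist" using vdist_props(1) by linarith
  have roots: "L \<le> lp" "L \<le> lm" "lp = Q + D lp + J lp" "lm = Q + D lm - J lm"
    using assms vdist_ge_2(1)[OF d2] unfolding secular_root_def by auto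
  have "lp \<le> Q + m" "lm \<le> Q + m"
    using D_J_bounds[OF roots(1)] D_J_bounds[OF roots(2)] roots(3,4) vdist_ge_2(3)[OF d2] by linarith+
  hence "1 / (Q + m) ^ (vdist - 1) \<le> J lp" "1 / (Q + m) ^ (vdist - 1) \<le> J lm"
    using J_ge_shortest_path[OF d2] assms unfolding secular_root_def by auto
  thus ?thesis using vdist_ge_2(1)[OF d2] by simp
qed

lemma lipschitz_constant_le: "m / (L * (L - 2 * m)) \<le> 1 / Q"
proof -
  have "m * Q \<le> (Q/2) * (Q/2)" using Q_ge m_nonneg by (simp add: algebra_simps mult_right_mono)
  also have "\<dots> \<le> L * (L - 2 * m)" by (rule mult_mono) (use L_ge Q_ge L_def in auto)
  finally have "m * Q \<le> L * (L - 2 * m)" .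
  moreover have "0 < L * (L - 2 * m)" "0 < Q" using L_ge Q_ge m_nonneg by auto
  ultimately show ?thesis by (simp add: divide_simps mult.commute)
qed

text \<open>The roots lp, lm differ by 2 A(v, \<sigma> v) + J lp + J lm up to D lp - D lm, and D is
  Lipschitz with constant at most 1/Q, so that error is a small multiple of the gap itself.\<close>

lemma secular_roots_gap:
  assumes "secular_root 1 lp" "secular_root (-1) lm"
  shows "0 < lp - lm" "2 / (Q + m) ^ (vdist - 1) \<le> (lp - lm) * (1 + 1/Q)"
proof -
  define S where "S = m / (L * (L - 2 * m))"
  define G where "G = 2 * A v (\<sigma> v) + J lp + J lm"
  have roots: "L \<le> lp" "L \<le> lm" "lp - lm = G + (D lp - D lm)"
    using assms unfolding secular_root_def G_def by auto
  have "S \<le> 1/Q" unfolding S_def by (rule lipschitz_constant_le)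
  moreover have "1 / Q < 1" using Q_ge m_nonneg by simp
  moreover have "0 \<le> S" using L_ge m_nonneg unfolding S_def by simp
  ultimately have S: "0 \<le> S" "S \<le> 1/Q" "S < 1" by auto
  have D_diff: "\<bar>D lp - D lm\<bar> \<le> \<bar>lp - lm\<bar> * S"
    unfolding D_def S_def
    by (rule neumann_sum_lipschitz[OF ret_walks_bounds(2) m_nonneg _ roots(1,2)]) (use L_ge in simp)
  have G: "2 / (Q + m) ^ (vdist - 1) \<le> G"
    unfolding G_def by (rule gap_numerator_ge[OF assms])
  moreover have "0 < 2 / (Q + m) ^ (vdist - 1)" using Q_ge m_nonneg by simp
  ultimately have "0 < G" by linarith
  note gap = lower_bound_under_relative_error[OF roots(3) D_diff S(1,3) this]
  show "0 < lp - lm" by (rule gap(1))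
  have "(lp - lm) * (1 + S) \<le> (lp - lm) * (1 + 1/Q)" using gap(1) S(2) by simp
  with G gap(2) show "2 / (Q + m) ^ (vdist - 1) \<le> (lp - lm) * (1 + 1/Q)" by linarith
qed

lemma defect_sq_le_eps: "(12 / Q)\<^sup>2 \<le> \<epsilon>"
proof -
  have "\<epsilon>\<^sup>2 \<le> \<epsilon>" using eps_pos eps_less_1 by (simp add: power2_eq_square mult_left_le)
  hence "256 \<le> Q * \<epsilon>" using Q_eps_ge Q_ge m_nonneg
    by (smt (verit) mult_left_mono)
  hence "256 * 256 \<le> Q * \<epsilon> * Q" using Q_ge m_nonneg by (intro mult_mono) auto
  thus ?thesis using Q_ge by (simp add: power_divide divide_le_eq power2_eq_square mult_ac)
qed

lemma remainder_sq_le: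
  assumes "secular_root 1 lp" "secular_root (-1) lm"
  shows "(\<Sum>z\<in>UNIV. ((resolvent lp (b_sym 1) z - resolvent lm (b_sym (-1)) z) / 2)\<^sup>2)
           \<le> 4 * m / (L - m)\<^sup>2"
proof -
  define w where "w z = (resolvent lp (b_sym 1) z - resolvent lm (b_sym (-1)) z) / 2" for z
  have L: "L \<le> lp" "L \<le> lm" using assms unfolding secular_root_def by auto
  have ml: "m < lp" "m < lm" using L L_ge by linarith+
  have Lm: "0 < L - m" using L_ge m_nonneg by linarith
  have b_abs: "\<bar>b_sym 1 z\<bar> \<le> 2" "\<bar>b_sym (-1) z\<bar> \<le> 2" for z by (rule abs_b_sym_le, simp)+
  have b_l1: "(\<Sum>z\<in>UNIV. \<bar>b_sym 1 z\<bar>) \<le> 2 * m" "(\<Sum>z\<in>UNIV. \<bar>b_sym (-1) z\<bar>) \<le> 2 * m"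
    by (rule sum_abs_b_sym_le, simp)+
  have mono: "c / (l - m) \<le> c / (L - m)" if "L \<le> l" "0 \<le> c" for c l
    by (rule divide_left_mono) (use that Lm in auto)
  have w_abs: "\<bar>w z\<bar> \<le> 2 / (L - m)" for z
  proof -
    have "\<bar>resolvent lp (b_sym 1) z\<bar> \<le> 2 / (L - m)" "\<bar>resolvent lm (b_sym (-1)) z\<bar> \<le> 2 / (L - m)"
      using abs_resolvent_le[of "b_sym 1" 2, OF b_abs(1) ml(1)] abs_resolvent_le[of "b_sym (-1)" 2, OF b_abs(2) ml(2)]
        mono[OF L(1), of 2] mono[OF L(2), of 2] by (auto intro: order_trans)
    thus ?thesis unfolding w_def by (simp add: abs_le_iff)
  qed
  have w_l1: "(\<Sum>z\<in>UNIV. \<bar>w z\<bar>) \<le> 2 * m / (L - m)"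
  proof -
    have "(\<Sum>z\<in>UNIV. \<bar>w z\<bar>)
        \<le> (\<Sum>z\<in>UNIV. (\<bar>resolvent lp (b_sym 1) z\<bar> + \<bar>resolvent lm (b_sym (-1)) z\<bar>) / 2)"
      unfolding w_def by (rule sum_mono) simp
    also have "\<dots>
        = ((\<Sum>z\<in>UNIV. \<bar>resolvent lp (b_sym 1) z\<bar>) + (\<Sum>z\<in>UNIV. \<bar>resolvent lm (b_sym (-1)) z\<bar>)) / 2"
      unfolding sum_divide_distrib[symmetric] sum.distrib by (rule refl)
    also have "\<dots> \<le> (2 * m / (lp - m) + 2 * m / (lm - m)) / 2"
      using resolvent_l1_le[of "b_sym 1" 2, OF b_abs(1) b_l1(1) ml(1)] resolvent_l1_le[of "b_sym (-1)" 2, OF b_abs(2) b_l1(2) ml(2)] by simp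
    also have "\<dots> \<le> 2 * m / (L - m)"
      using mono[OF L(1), of "2 * m"] mono[OF L(2), of "2 * m"] m_nonneg by simp
    finally show ?thesis .
  qed
  have "(\<Sum>z\<in>UNIV. (w z)\<^sup>2) = (\<Sum>z\<in>UNIV. \<bar>w z\<bar> * \<bar>w z\<bar>)" by (simp add: power2_eq_square)
  also have "\<dots> \<le> (\<Sum>z\<in>UNIV. \<bar>w z\<bar> * (2 / (L - m)))"
    by (rule sum_mono, rule mult_left_mono[OF w_abs]) simp
  also have "\<dots> \<le> 2 * m / (L - m) * (2 / (L - m))"
    unfolding sum_distrib_right[symmetric] by (rule mult_right_mono[OF w_l1]) (use Lm in simp)
  also have "\<dots> = 4 * m / (L - m)\<^sup>2" by (simp add: power2_eq_square)
  finally show ?thesis unfolding w_def .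
qed

lemma remainder_bound_le: "4 * m / (L - m)\<^sup>2 \<le> (\<epsilon> / 4)\<^sup>2"
proof -
  have Q0: "0 < Q" using Q_ge m_nonneg by linarith
  have "Q / 2 \<le> L - m" using Q_ge m_nonneg unfolding L_def by linarith
  hence "4 * m / (L - m)\<^sup>2 \<le> 4 * m / (Q / 2)\<^sup>2"
    using Q0 by (intro divide_left_mono power_mono mult_pos_pos) auto
  also have "\<dots> \<le> (\<epsilon> / 4)\<^sup>2"
  proof -
    have "256 * m \<le> Q * \<epsilon>\<^sup>2" using Q_eps_ge by simp
    also have "\<dots> \<le> Q * \<epsilon>\<^sup>2 * Q" using Q_ge Q_eps_ge m_nonneg by (simp add: mult_le_cancel_left1)
    finally show ?thesis using Q0 by (simp add: divide_le_eq power2_eq_square mult_ac)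
  qed
  finally show ?thesis .
qed

lemma transfer_amplitude_ge:
  assumes "secular_root 1 lp" "secular_root (-1) lm"
  shows "cmod ((exp (\<i> * complex_of_real (t * lp)) - exp (\<i> * complex_of_real (t * lm))) / 2) - \<epsilon> / 4
           \<le> cmod (U Q t v (\<sigma> v))"
proof -
  define w where "w z = (resolvent lp (b_sym 1) z - resolvent lm (b_sym (-1)) z) / 2" for z
  have "w z = (trial_vector 1 lp z - trial_vector (-1) lm z) / 2 - (if z = \<sigma> v then 1 else 0)" for z
    unfolding w_def trial_vector_def by (simp add: field_simps)
  hence amplitude: "U Q t v (\<sigma> v)
      = (exp (\<i> * complex_of_real (t * lp)) - exp (\<i> * complex_of_real (t * lm))) / 2
        - (\<Sum>z\<in>UNIV. U Q t v z * complex_of_real (w z))"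
    using U_transfer_amplitude[OF secular_root_trial_vector[OF _ assms(1)] trial_vector_at_v
        secular_root_trial_vector[OF _ assms(2)] trial_vector_at_v]
    by simp
  have "(cmod (\<Sum>z\<in>UNIV. U Q t v z * complex_of_real (w z)))\<^sup>2 \<le> (\<Sum>z\<in>UNIV. (w z)\<^sup>2)"
    by (rule norm_U_mult_le)
  also have "\<dots> \<le> (\<epsilon> / 4)\<^sup>2"
    using remainder_sq_le[OF assms] remainder_bound_le unfolding w_def by linarith
  finally have "cmod (\<Sum>z\<in>UNIV. U Q t v z * complex_of_real (w z)) \<le> \<epsilon> / 4"
    by (rule power2_le_imp_le) (use eps_pos in simp)
  thus ?thesis unfolding amplitude using norm_triangle_ineq2 by (smt (verit))
qed

lemma transfer_prob_near_half_period:
  assumes "secular_root 1 lp" "secular_root (-1) lm" "t * (lp - lm) = pi / (1 + 1/Q)\<^sup>2"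
  shows "1 - \<epsilon> \<le> transfer_prob (H Q) v (\<sigma> v) t"
proof -
  define \<eta> where "\<eta> = pi - pi / (1 + 1/Q)\<^sup>2"
  have "t * lp - t * lm = pi - \<eta>" using assms(3) unfolding \<eta>_def by (simp add: algebra_simps)
  hence "1 - \<eta>\<^sup>2 / 4 \<le> cmod ((exp (\<i> * complex_of_real (t * lp)) - exp (\<i> * complex_of_real (t * lm))) / 2)"
    by (rule half_exp_diff_norm_ge)
  moreover have "\<eta>\<^sup>2 \<le> \<epsilon>"
  proof -
    have "0 \<le> 1/Q" "1/Q \<le> 1" using Q_ge m_nonneg by auto
    hence "0 \<le> \<eta>" "\<eta> \<le> 12 * (1/Q)" unfolding \<eta>_def by (rule pi_defect_le)+
    hence "\<eta>\<^sup>2 \<le> (12 * (1/Q))\<^sup>2" by (rule power_mono[rotated])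
    thus ?thesis using defect_sq_le_eps by simp
  qed
  ultimately have "1 - \<epsilon> \<le> (cmod (U Q t v (\<sigma> v)))\<^sup>2"
    using transfer_amplitude_ge[OF assms(1,2), of t] eps_less_1
    by (intro one_minus_le_power2[of \<eta> "\<epsilon> / 4"]) auto
  thus ?thesis unfolding transfer_prob_def U_def .
qed

lemma transfer_prob_ge:
  "\<exists>t. 0 < t \<and> t < pi / 2 * (Q + m) ^ (vdist - 1) \<and> 1 - \<epsilon> \<le> transfer_prob (H Q) v (\<sigma> v) t"
proof -
  obtain lp lm where roots: "secular_root 1 lp" "secular_root (-1) lm"
    using secular_root_exists[of 1] secular_root_exists[of "-1"] by auto
  note gap = secular_roots_gap[OF roots]
  have "0 < 1/Q" using Q_ge m_nonneg by simp
  hence q: "0 < 1/Q" "0 < 1 + 1/Q" by linarith+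
  \<comment> \<open>The second factor 1 + 1/Q makes t strictly smaller than the bound, at the cost of a phase
    defect of order 1/Q.\<close>
  define t where "t = pi / ((lp - lm) * (1 + 1/Q)\<^sup>2)"
  have "0 < t" unfolding t_def using gap(1) q by (simp add: zero_less_mult_iff)
  moreover have "t < pi / 2 * (Q + m) ^ (vdist - 1)"
  proof -
    have "(lp - lm) * (1 + 1/Q) < (lp - lm) * (1 + 1/Q)\<^sup>2"
      using gap(1) q by (simp add: power2_eq_square)
    hence "2 / (Q + m) ^ (vdist - 1) < (lp - lm) * (1 + 1/Q)\<^sup>2" using gap(2) by linarith
    hence "t < pi / (2 / (Q + m) ^ (vdist - 1))"
      unfolding t_def using Q_ge gap(1) q by (intro divide_strict_left_mono) auto
    thus ?thesis by simp
  qed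
  moreover have "t * (lp - lm) = pi / (1 + 1/Q)\<^sup>2" unfolding t_def using gap(1) by simp
  hence "1 - \<epsilon> \<le> transfer_prob (H Q) v (\<sigma> v) t" by (rule transfer_prob_near_half_period[OF roots])
  ultimately show ?thesis by blast
qed

end

theorem theorem3:
  fixes E :: "'a::finite \<Rightarrow> 'a \<Rightarrow> bool" and \<sigma> :: "'a \<Rightarrow> 'a"
    and v :: 'a and Q \<epsilon> :: real
  assumes "simple_graph E" and "connected_graph E"
    and "graph_involution E \<sigma>"
    and "\<sigma> v \<noteq> v"
    and "0 < \<epsilon>" and "\<epsilon> < 1"
    and "Q \<ge> 256 * (real (max_degree E) + 1) / \<epsilon>\<^sup>2"
  shows "\<exists>t. 0 < t \<and> t < pi / 2 * (Q + real (max_degree E)) ^ (graph_dist E v (\<sigma> v) - 1)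
            \<and> transfer_prob (hamiltonian E Q v (\<sigma> v)) v (\<sigma> v) t \<ge> 1 - \<epsilon>"
proof -
  interpret strong_potential E \<sigma> v Q \<epsilon>
    by unfold_locales (use assms in auto)
  show ?thesis using transfer_prob_ge unfolding vdist_def by auto
qed

end
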